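(* Suppose Assumptions 1–5 hold. Then: (i) $\lVert T^{1/2}\boldsymbol\theta(\alpha,\hat\beta_{T\alpha},\hat\pi_{T\alpha},\hat\varpi_{T\alpha})\rVert=O_{p\alpha}(1)$; (ii) $R_T(\alpha,\hat\beta_{T\alpha},\hat\pi_{T\alpha},\hat\varpi_{T\alpha})=o_{p\alpha}(1)$; (iii) $$L^\pi_T(\alpha,\hat\beta_{T\alpha},\hat\pi_{T\alpha},\hat\varpi_{T\alpha})-L^\pi_T(\alpha,\beta^*,\pi^*,0)=\tfrac12 Z_{T\alpha}'\mathcal I_\alpha Z_{T\alpha}-\tfrac12\big[T^{1/2}\hat{\boldsymbol\theta}_{T\alpha}-Z_{T\alpha}\big]'\mathcal I_\alpha\big[T^{1/2}\hat{\boldsymbol\theta}_{T\alpha}-Z_{T\alpha}\big]+o_{p\alpha}(1),$$ where $\hat{\boldsymbol\theta}_{T\alpha}=\boldsymbol\theta(\alpha,\hat\beta_{T\alpha},\hat\pi_{T\alpha},\hat\varpi_{T\alpha})$.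
   Context: Setting. Fix an integer $p\ge1$. $\{y_t\}$ is a real-valued time series observed for $t=-p+1,\dots,T$; write $\boldsymbol y_{t-1}=(y_{t-1},\dots,y_{t-p})$ and $\mathcal F_t=\sigma(y_s,\ s\le t)$. For $\tilde\phi=(\tilde\phi_0,\tilde\phi_1,\dots,\tilde\phi_p,\tilde\sigma^2)\in\mathbb R^{p+1}\times(0,\infty)$ let $f_t(\tilde\phi)=\tilde\sigma^{-1}\mathfrak N\big((y_t-\tilde\phi_0-\sum_{i=1}^p\tilde\phi_iy_{t-i})/\tilde\sigma\big)$ with $\mathfrak N(u)=(2\pi)^{-1/2}e^{-u^2/2}$; $\nabla f_t$ denotes the gradient with respect to $\tilde\phi$. Integers $q_1\ge0$, $q_2\ge1$ with $q_1+q_2=p+2$ and a known $(p+2)\times(p+2)$ permutation matrix $P$ are fixed; for $\beta\in\mathbb R^{q_1},\phi\in\mathbb R^{q_2}$ write $f_t(\beta,\phi)=f_t(P^{-1}(\beta,\phi))$. Given a mixing weight $\alpha_t(\alpha,\beta,\phi,\varphi)$ depending on an additional parameter $\alpha$, the two-regime mixture autoregressive log-likelihood is $L_T(\alpha,\beta,\phi,\varphi)=\sum_{t=1}^T\log[\alpha_tf_t(\beta,\phi)+(1-\alpha_t)f_t(\beta,\varphi)]$; the null (linear AR) log-likelihood is $L^0_T(\tilde\phi)=\sum_{t=1}^T\log f_t(\tilde\phi)$. Let $\hat{\tilde\phi}_T$ satisfy $L^0_T(\hat{\tilde\phi}_T)=\sup_{\tilde\phi\in\tilde\Phi}L^0_T(\tilde\phi)+o_p(1)$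 and $\hat{\tilde\phi}_T=\tilde\phi^*+o_p(1)$. Define $LR_T(\alpha)=2[\sup_{(\beta,\phi,\varphi)\in B\times\Phi\times\Phi}L_T(\alpha,\beta,\phi,\varphi)-\sup_{\tilde\phi\in\tilde\Phi}L^0_T(\tilde\phi)]$ and $LR_T=\sup_{\alpha\in A}LR_T(\alpha)$. Notation. For random quantities $X_{T\alpha}$ indexed by $\alpha\in A$, $X_{T\alpha}=o_{p\alpha}(1)$ (resp. $O_{p\alpha}(1)$) means $\sup_{\alpha\in A}\|X_{T\alpha}\|=o_p(1)$ (resp. $O_p(1)$). $\mathcal B(A,\mathbb R^k)$ (resp. $\mathcal C(A,\mathbb R^k)$) is the space of bounded (resp. continuous) $\mathbb R^k$-valued functions on $A$ with the uniform metric; $\Rightarrow$ denotes weak convergence of processes in such spaces. A set $\Lambda\subset\mathbb R^r$ is a cone if $\lambda\in\Lambda$ implies $a\lambda\in\Lambda$ for all real $a>0$. A collection $\{\Gamma_\alpha,\alpha\in A\}$ of subsets of $\mathbb R^r$ is locally uniformly equal to $\Lambda\subset\mathbb R^r$ if there is $\delta>0$ with $\Gamma_\alpha\cap(-\delta,\delta)^r=\Lambda\cap(-\delta,\delta)^r$ for all $\alpha\in A$. $\lambda_{\min},\lambda_{\max}$ denote smallest/largest eigenvalues. Assumption 1. (i) $y_t=\tilde\phi^*_0+\sum_{i=1}^p\tilde\phi^*_iy_{t-i}+\tilde\sigma^*\varepsilon_t$ is a stationary linear Gaussian AR($p$) process, $\varepsilon_t$ i.i.d. $N(0,1)$ with $\varepsilon_t$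 independent of $\{y_{t-j},j>0\}$, where $\tilde\phi^*$ is an interior point of a compact set $\tilde\Phi\subset\{\tilde\phi:\tilde\phi_0\in\mathbb R,\ 1-\sum_{i=1}^p\tilde\phi_iz^i\ne0\text{ for }|z|\le1,\ \tilde\sigma^2\in(0,\infty)\}$. (ii) The parameter space of $(\alpha,\beta,\phi,\varphi)$ is $A\times B\times\Phi\times\Phi$ with $A\subset\mathbb R^a$ compact and $B\subset\mathbb R^{q_1}$, $\Phi\subset\mathbb R^{q_2}$ compact such that $(\beta,\phi)\in B\times\Phi$ iff $P^{-1}(\beta,\phi)\in\tilde\Phi$; write $(\beta^*,\phi^* )=P\tilde\phi^*$. (iii) For all $t$ and all parameter values, $\alpha_t(\alpha,\beta,\phi,\varphi)$ is $\sigma(\boldsymbol y_{t-1})$-measurable and lies in $(0,1)$. Assumption 2. For each $\alpha\in A$, estimators $(\hat\beta_{T\alpha},\hat\phi_{T\alpha},\hat\varphi_{T\alpha})\in B\times\Phi\times\Phi$ satisfy (i) $L_T(\alpha,\hat\beta_{T\alpha},\hat\phi_{T\alpha},\hat\varphi_{T\alpha})=\sup_{(\beta,\phi,\varphi)\in B\times\Phi\times\Phi}L_T(\alpha,\beta,\phi,\varphi)+o_{p\alpha}(1)$ and (ii) $(\hat\beta_{T\alpha},\hat\phi_{T\alpha},\hat\varphi_{T\alpha})=(\beta^*,\phi^*,\phi^* )+o_{p\alpha}(1)$. Assumption 3. (i) For every $\alpha\in A$ the map $(\pi,\varpi)=\boldsymbol\pi_\alpha(\phi,\varphi)$ from $\Phi\times\Phi$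 onto $\Pi_\alpha:=\boldsymbol\pi_\alpha(\Phi\times\Phi)\subset\mathbb R^{2q_2}$ is one-to-one with $\boldsymbol\pi_\alpha$ and $\boldsymbol\pi_\alpha^{-1}$ continuous. (ii) $\boldsymbol\pi_\alpha(\{(\phi,\phi):\phi\in\Phi\})=\Phi\times\{0\}$ and $\boldsymbol\pi_\alpha(\phi^*,\phi^* )=(\pi^*,0)$ with $\pi^*:=\phi^*$. (iii) $(\hat\beta_{T\alpha},\hat\pi_{T\alpha},\hat\varpi_{T\alpha})=(\beta^*,\pi^*,0)+o_{p\alpha}(1)$, where $(\hat\pi_{T\alpha},\hat\varpi_{T\alpha})=\boldsymbol\pi_\alpha(\hat\phi_{T\alpha},\hat\varphi_{T\alpha})$. The reparameterized log-likelihood is $L^\pi_T(\alpha,\beta,\pi,\varpi)=L_T(\alpha,\beta,\boldsymbol\pi_\alpha^{-1}(\pi,\varpi))$. Assumption 4. For some integer $k\ge2$ and every $\alpha\in A$, $\alpha_t(\alpha,\cdot)$ and $\boldsymbol\pi^{-1}_\alpha$ are $k$ times continuously differentiable on the interiors of $B\times\Phi\times\Phi$ and $\Pi_\alpha$, respectively. Assumption 5. For each $\alpha\in A$ and $(\beta,\pi,\varpi)\in B\times\Pi_\alpha$, with $\boldsymbol\theta=\boldsymbol\theta(\alpha,\beta,\pi,\varpi)$, $L^\pi_T(\alpha,\beta,\pi,\varpi)-L^\pi_T(\alpha,\beta^*,\pi^*,0)=(T^{-1/2}S_{T\alpha})'[T^{1/2}\boldsymbol\theta]-\tfrac12[T^{1/2}\boldsymbol\theta]'\mathcal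 I_\alpha[T^{1/2}\boldsymbol\theta]+R_T(\alpha,\beta,\pi,\varpi)$, where: (i) for each $\alpha$, $\boldsymbol\theta(\alpha,\cdot)$ maps $B\times\Pi_\alpha$ onto $\Theta_\alpha\subset\mathbb R^r$, with (a) $\boldsymbol\theta(\alpha,\beta^*,\pi^*,0)=0$ and (b) for every $\epsilon>0$ there is $\delta_\epsilon>0$ with $\inf_{\alpha\in A}\inf_{(\beta,\pi,\varpi)\in B\times\Pi_\alpha:\|(\beta,\pi,\varpi)-(\beta^*,\pi^*,0)\|\ge\epsilon}\|\boldsymbol\theta(\alpha,\beta,\pi,\varpi)\|\ge\delta_\epsilon$; (ii) $S_{T\alpha}=\sum_{t=1}^Ts_{t\alpha}$ is an $\mathbb R^r$-valued $\mathcal F_T$-measurable process indexed by $\alpha\in A$, not depending on $(\beta,\pi,\varpi)$, with sample paths continuous in $\alpha$, and $T^{-1/2}S_{T\bullet}\Rightarrow S_\bullet$ for a mean-zero $\mathbb R^r$-valued Gaussian process $\{S_\alpha:\alpha\in A\}$ with a.s. continuous sample paths and $E[S_\alpha S_\alpha']=E[s_{t\alpha}s_{t\alpha}']=\mathcal I_\alpha$; (iii) $\mathcal I_\alpha$ is a nonrandom symmetric $r\times r$ matrix not depending on $(\beta,\pi,\varpi)$, continuous in $\alpha$, with $0<\inf_{\alpha\in A}\lambda_{\min}(\mathcal I_\alpha)$ and $\sup_{\alpha\in A}\lambda_{\max}(\mathcal I_\alpha)<\infty$; (iv) for every nonrandom sequence of positive scalars $\gamma_T\to0$, $\sup_{(\beta,\pi,\varpi)\in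 B\times\Pi_\alpha:\|(\beta,\pi,\varpi)-(\beta^*,\pi^*,0)\|\le\gamma_T}|R_T(\alpha,\beta,\pi,\varpi)|/(1+\|T^{1/2}\boldsymbol\theta(\alpha,\beta,\pi,\varpi)\|)^2=o_{p\alpha}(1)$. Assumption 6. $\{\Theta_\alpha,\alpha\in A\}$ is locally uniformly equal to a cone $\Lambda\subset\mathbb R^r$. Assumption 7. With $q_\theta=q_1+q_2$ and $q_\vartheta=r-q_\theta$, $\Lambda=\mathbb R^{q_\theta}\times\Lambda_\vartheta$ for a cone $\Lambda_\vartheta\subset\mathbb R^{q_\vartheta}$. Assumption 8. Partitioning $S_{T\alpha}=(S_{T\theta\alpha},S_{T\vartheta\alpha})$ with $S_{T\theta\alpha}$ of dimension $q_\theta$, $S_{T\theta\alpha}=S^0_T:=\sum_{t=1}^T\nabla f_t(\tilde\phi^* )/f_t(\tilde\phi^* )$ for all $\alpha$. Let $\mathcal I^0=E[(\nabla f_t(\tilde\phi^* )/f_t(\tilde\phi^* ))(\nabla f_t(\tilde\phi^* )/f_t(\tilde\phi^* ))']$. Further notation. $Z_{T\alpha}=\mathcal I_\alpha^{-1}T^{-1/2}S_{T\alpha}$, $Z_\alpha=\mathcal I_\alpha^{-1}S_\alpha$. Partition $S_\alpha=(S_{\theta\alpha},S_{\vartheta\alpha})$, $Z_\alpha=(Z_{\theta\alpha},Z_{\vartheta\alpha})$, $\boldsymbol\lambda=(\boldsymbol\lambda_\theta,\boldsymbol\lambda_\vartheta)$ and $\mathcal I_\alpha$ into blocks $\mathcal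 I_{\theta\theta\alpha},\mathcal I_{\theta\vartheta\alpha},\mathcal I_{\vartheta\theta\alpha},\mathcal I_{\vartheta\vartheta\alpha}$ conformably with dimensions $q_\theta,q_\vartheta$; $(\mathcal I_\alpha^{-1})_{\vartheta\vartheta}$ is the bottom-right $q_\vartheta\times q_\vartheta$ block of $\mathcal I_\alpha^{-1}$. $\Theta_{\alpha,T}=\{T^{1/2}\boldsymbol\theta:\boldsymbol\theta\in\Theta_\alpha\}$. *)

theory Defs
  imports "HOL-Analysis.Analysis" "HOL-Probability.Probability"
begin

section \<open>Coordinate subspaces (embedding of R^q1, R^q2 into R^(p+2))\<close>

definition coordsub :: "'m::finite set \<Rightarrow> (real^'m) set" where
  "coordsub S = {x. \<forall>i. i \<notin> S \<longrightarrow> x $ i = 0}"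

definition proj :: "'m::finite set \<Rightarrow> real^'m \<Rightarrow> real^'m" where
  "proj S v = (\<chi> i. if i \<in> S then v $ i else 0)"

definition dirs3 :: "'m::finite set \<Rightarrow> ((real^'m) \<times> (real^'m) \<times> (real^'m)) set" where
  "dirs3 Sb = {(axis i 1, 0, 0) | i. i \<in> Sb} \<union> {(0, axis i 1, 0) | i. i \<notin> Sb}
              \<union> {(0, 0, axis i 1) | i. i \<notin> Sb}"

definition dirs2 :: "'m::finite set \<Rightarrow> ((real^'m) \<times> (real^'m)) set" where
  "dirs2 Sb = {(axis i 1, 0) | i. i \<notin> Sb} \<union> {(0, axis i 1) | i. i \<notin> Sb}"

definition sub_interior :: "'a::metric_space set \<Rightarrow> 'a set \<Rightarrow> 'a set" where
  "sub_interior V S = {x \<in> S. \<exists>e>0. \<forall>z\<in>V. dist z x < e \<longrightarrow> z \<in> S}"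

fun Ck_dirs :: "'a::real_normed_vector set \<Rightarrow> nat \<Rightarrow> 'a set \<Rightarrow> ('a \<Rightarrow> 'b::real_normed_vector) \<Rightarrow> bool" where
  "Ck_dirs D 0 U f = continuous_on U f"
| "Ck_dirs D (Suc k) U f = (continuous_on U f \<and>
     (\<forall>d\<in>D. \<exists>g. (\<forall>x\<in>U. ((\<lambda>t. f (x + t *\<^sub>R d)) has_vector_derivative g x) (at 0))
                 \<and> Ck_dirs D k U g))"

text \<open>ix enumerates the coordinates of tilde-phi: ix 0 = phi_0, ix i = phi_i (1<=i<=p),
  ix (p+1) = sigma^2.\<close>
definition ar_param_set :: "nat \<Rightarrow> (nat \<Rightarrow> 'm::finite) \<Rightarrow> (real^'m) set" where
  "ar_param_set p ix = {v. (\<forall>z::complex. cmod z \<le> 1 \<longrightarrow>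
        1 - (\<Sum>i=1..p. complex_of_real (v $ ix i) * z ^ i) \<noteq> 0) \<and> 0 < v $ ix (p+1)}"

definition ar_dens :: "nat \<Rightarrow> (nat \<Rightarrow> 'm::finite) \<Rightarrow> (int \<Rightarrow> real) \<Rightarrow> int \<Rightarrow> real^'m \<Rightarrow> real" where
  "ar_dens p ix y t v = (let s = sqrt (v $ ix (p+1)) in
     std_normal_density ((y t - v $ ix 0 - (\<Sum>i=1..p. v $ ix i * y (t - int i))) / s) / s)"

definition lagv :: "nat \<Rightarrow> (int \<Rightarrow> real) \<Rightarrow> int \<Rightarrow> (nat \<Rightarrow> real)" where
  "lagv p y t = (\<lambda>i\<in>{..<p}. y (t - 1 - int i))"

definition mix_loglik :: "nat \<Rightarrow> (nat \<Rightarrow> 'm::finite)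
    \<Rightarrow> (int \<Rightarrow> 'al \<Rightarrow> real^'m \<Rightarrow> real^'m \<Rightarrow> real^'m \<Rightarrow> (nat \<Rightarrow> real) \<Rightarrow> real)
    \<Rightarrow> (int \<Rightarrow> real) \<Rightarrow> nat \<Rightarrow> 'al \<Rightarrow> real^'m \<Rightarrow> real^'m \<Rightarrow> real^'m \<Rightarrow> real" where
  "mix_loglik p ix mixw y T a b \<phi> \<psi> =
     (\<Sum>t\<in>{1..int T}. ln (mixw t a b \<phi> \<psi> (lagv p y t) * ar_dens p ix y t (b + \<phi>)
                        + (1 - mixw t a b \<phi> \<psi> (lagv p y t)) * ar_dens p ix y t (b + \<psi>)))"


text \<open>Reparameterized log-likelihood L^pi_T and the remainder R_T of Assumption 5
  (Sv is the value of S_{T alpha}, th the map theta(alpha,.), Iv the matrix I_alpha).\<close>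
definition lpi :: "nat \<Rightarrow> (nat \<Rightarrow> 'm::finite)
    \<Rightarrow> (int \<Rightarrow> 'al \<Rightarrow> real^'m \<Rightarrow> real^'m \<Rightarrow> real^'m \<Rightarrow> (nat \<Rightarrow> real) \<Rightarrow> real)
    \<Rightarrow> ('al \<Rightarrow> (real^'m) \<times> (real^'m) \<Rightarrow> (real^'m) \<times> (real^'m))
    \<Rightarrow> (int \<Rightarrow> real) \<Rightarrow> nat \<Rightarrow> 'al \<Rightarrow> real^'m \<Rightarrow> real^'m \<Rightarrow> real^'m \<Rightarrow> real" where
  "lpi p ix mixw pinv y T a b pp ww =
     mix_loglik p ix mixw y T a b (fst (pinv a (pp, ww))) (snd (pinv a (pp, ww)))"

definition remT :: "nat \<Rightarrow> (nat \<Rightarrow> 'm::finite)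
    \<Rightarrow> (int \<Rightarrow> 'al \<Rightarrow> real^'m \<Rightarrow> real^'m \<Rightarrow> real^'m \<Rightarrow> (nat \<Rightarrow> real) \<Rightarrow> real)
    \<Rightarrow> ('al \<Rightarrow> (real^'m) \<times> (real^'m) \<Rightarrow> (real^'m) \<times> (real^'m))
    \<Rightarrow> real^'r::finite \<Rightarrow> (real^'m \<Rightarrow> real^'m \<Rightarrow> real^'m \<Rightarrow> real^'r) \<Rightarrow> real^'r^'r
    \<Rightarrow> (int \<Rightarrow> real) \<Rightarrow> nat \<Rightarrow> 'al \<Rightarrow> real^'m \<Rightarrow> real^'m
    \<Rightarrow> real^'m \<Rightarrow> real^'m \<Rightarrow> real^'m \<Rightarrow> real" where
  "remT p ix mixw pinv Sv th Iv y T a bs ps b pp ww =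
     (let x = sqrt (real T) *\<^sub>R th b pp ww in
      lpi p ix mixw pinv y T a b pp ww - lpi p ix mixw pinv y T a bs ps 0
        - ((1 / sqrt (real T)) *\<^sub>R Sv) \<bullet> x + (1/2) * (x \<bullet> (Iv *v x)))"

definition mat_eigvals :: "real^'n^'n \<Rightarrow> real set" where
  "mat_eigvals X = {l. \<exists>v. v \<noteq> 0 \<and> X *v v = l *\<^sub>R v}"

definition lambda_min :: "real^'n^'n \<Rightarrow> real" where
  "lambda_min X = Inf (mat_eigvals X)"

definition lambda_max :: "real^'n^'n \<Rightarrow> real" where
  "lambda_max X = Sup (mat_eigvals X)"

definition outer_prob :: "'w measure \<Rightarrow> 'w set \<Rightarrow> real" where
  "outer_prob M E = Inf {measure M B | B. B \<in> sets M \<and> E \<subseteq> B}"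

definition unif_op1 :: "'w measure \<Rightarrow> (nat \<Rightarrow> 'i set) \<Rightarrow> (nat \<Rightarrow> 'i \<Rightarrow> 'w \<Rightarrow> real) \<Rightarrow> bool" where
  "unif_op1 M I X \<longleftrightarrow> (\<forall>e>0. ((\<lambda>T. outer_prob M {\<omega>\<in>space M. \<exists>i\<in>I T. \<bar>X T i \<omega>\<bar> > e})
                                 \<longlongrightarrow> 0) sequentially)"

definition unif_Op1 :: "'w measure \<Rightarrow> (nat \<Rightarrow> 'i set) \<Rightarrow> (nat \<Rightarrow> 'i \<Rightarrow> 'w \<Rightarrow> real) \<Rightarrow> bool" where
  "unif_Op1 M I X \<longleftrightarrow> (\<forall>e>0. \<exists>K. eventually
      (\<lambda>T. outer_prob M {\<omega>\<in>space M. \<exists>i\<in>I T. \<bar>X T i \<omega>\<bar> > K} < e) sequentially)"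

definition bfun_space :: "'a set \<Rightarrow> ('a \<Rightarrow> 'b::real_normed_vector) set" where
  "bfun_space A = {f. f \<in> extensional A \<and> bounded (f ` A)}"

definition bfun_dist :: "'a set \<Rightarrow> ('a \<Rightarrow> 'b::real_normed_vector) \<Rightarrow> ('a \<Rightarrow> 'b) \<Rightarrow> real" where
  "bfun_dist A f g = (SUP a\<in>A. norm (f a - g a))"

definition bcont_fun :: "'a set \<Rightarrow> (('a \<Rightarrow> 'b::real_normed_vector) \<Rightarrow> real) \<Rightarrow> bool" where
  "bcont_fun A h \<longleftrightarrow> bounded (range h) \<and>
     (\<forall>f\<in>bfun_space A. \<forall>e>0. \<exists>d>0. \<forall>g\<in>bfun_space A. bfun_dist A f g < d \<longrightarrow> \<bar>h f - h g\<bar> < e)"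

definition outer_exp :: "'w measure \<Rightarrow> ('w \<Rightarrow> real) \<Rightarrow> real" where
  "outer_exp M Y = Inf {integral\<^sup>L M U | U. integrable M U \<and> (\<forall>\<omega>\<in>space M. Y \<omega> \<le> U \<omega>)}"

text \<open>Weak convergence (Hoffmann-Joergensen) of X T to Z in B(A, R^r)\<close>
definition weak_conv_bfun :: "'w measure \<Rightarrow> 'v measure \<Rightarrow> 'a set
    \<Rightarrow> (nat \<Rightarrow> 'w \<Rightarrow> 'a \<Rightarrow> 'b::real_normed_vector) \<Rightarrow> ('v \<Rightarrow> 'a \<Rightarrow> 'b) \<Rightarrow> bool" where
  "weak_conv_bfun M N A X Z \<longleftrightarrow> (\<forall>h. bcont_fun A h \<longrightarrow>
     ((\<lambda>T. outer_exp M (\<lambda>\<omega>. h (restrict (X T \<omega>) A))) \<longlongrightarrow> outer_exp N (\<lambda>\<omega>. h (restrict (Z \<omega>) A)))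
       sequentially)"

definition centered_normal_rv :: "'v measure \<Rightarrow> ('v \<Rightarrow> real) \<Rightarrow> bool" where
  "centered_normal_rv N X \<longleftrightarrow> X \<in> borel_measurable N \<and>
     ((\<exists>s>0. distributed N lborel X (normal_density 0 s)) \<or> (AE \<omega> in N. X \<omega> = 0))"

end

theory Submission
  imports Defs
begin

(* The estimator nearly maximises the likelihood and the true parameter is feasible, so
   D = L(theta-hat) - L(theta* ) >= -o_p(1). Insert the quadratic expansion of Assumption 5 with
   x = T^(1/2) theta-hat and u = T^(-1/2) S_T, and use x' I x >= c |x|^2:
     (c/2) |x|^2 <= u'x + R + o_p(1) <= O_p(1) |x| + o_p(1) (1 + |x|)^2 + o_p(1).
   Here u = O_p(1) because a weakly convergent process with a.s. continuous limit is tight, and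
   R = o_p((1 + |x|)^2) because Assumption 5(iv) can be evaluated at the consistent estimator by
   choosing the neighbourhood radius to shrink slowly enough. Hence |x| = O_p(1), so R = o_p(1),
   and (iii) is the same expansion with the square completed around Z = I^(-1) u.
   Every bound is uniform in alpha. *)

lemma outer_prob_nonneg: "E \<subseteq> space M \<Longrightarrow> 0 \<le> outer_prob M E"
  unfolding outer_prob_def by (rule cInf_greatest) auto

lemma outer_prob_le_measure: "E \<subseteq> B \<Longrightarrow> B \<in> sets M \<Longrightarrow> outer_prob M E \<le> measure M B"
  unfolding outer_prob_def by (rule cInf_lower) (auto intro: bdd_belowI[of _ 0])

lemma outer_prob_empty: "outer_prob M {} = 0"
  using outer_prob_nonneg[of "{}" M] outer_prob_le_measure[of "{}" "{}" M] by simp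

lemma outer_prob_mono: "E \<subseteq> F \<Longrightarrow> F \<subseteq> space M \<Longrightarrow> outer_prob M E \<le> outer_prob M F"
  unfolding outer_prob_def by (rule cInf_superset_mono) (auto intro: bdd_belowI[of _ 0])

lemma outer_prob_approx:
  assumes "E \<subseteq> space M" "0 < e"
  obtains B where "B \<in> sets M" "E \<subseteq> B" "measure M B < outer_prob M E + e"
proof -
  let ?V = "{measure M B |B. B \<in> sets M \<and> E \<subseteq> B}"
  have less: "Inf ?V < outer_prob M E + e"
    using assms unfolding outer_prob_def by simp
  have "?V \<noteq> {}" using assms(1) by auto
  moreover have "bdd_below ?V" by (rule bdd_belowI[of _ 0]) auto
  ultimately have "\<exists>x\<in>?V. x < outer_prob M E + e"
    using less cInf_less_iff[of ?V] by blast
  then show ?thesis using that by auto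
qed

lemma outer_prob_Un:
  assumes "E \<subseteq> space M" "F \<subseteq> space M"
  shows "outer_prob M (E \<union> F) \<le> outer_prob M E + outer_prob M F"
proof (rule field_le_epsilon)
  fix e :: real assume "0 < e"
  obtain BE where BE: "BE \<in> sets M" "E \<subseteq> BE" "measure M BE < outer_prob M E + e/2"
    using outer_prob_approx[OF assms(1), of "e/2"] \<open>0 < e\<close> by auto
  obtain BF where BF: "BF \<in> sets M" "F \<subseteq> BF" "measure M BF < outer_prob M F + e/2"
    using outer_prob_approx[OF assms(2), of "e/2"] \<open>0 < e\<close> by auto
  have "outer_prob M (E \<union> F) \<le> measure M (BE \<union> BF)"
    using BE BF by (intro outer_prob_le_measure) auto
  also have "\<dots> \<le> measure M BE + measure M BF"
    using BE BF by (simp add: measure_Un_le)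
  finally show "outer_prob M (E \<union> F) \<le> outer_prob M E + outer_prob M F + e"
    using BE BF by simp
qed

lemma eventually_outer_prob_cover_less:
  assumes cover: "\<And>T. E T \<subseteq> F T \<union> G T" and "\<And>T. F T \<subseteq> space M" "\<And>T. G T \<subseteq> space M"
    and "eventually (\<lambda>T. outer_prob M (F T) < a) sequentially"
    and "eventually (\<lambda>T. outer_prob M (G T) < b) sequentially"
  shows "eventually (\<lambda>T. outer_prob M (E T) < a + b) sequentially"
  using assms(4,5)
proof eventually_elim
  case (elim T)
  have "outer_prob M (E T) \<le> outer_prob M (F T \<union> G T)"
    using assms(1-3) by (intro outer_prob_mono) auto
  also have "\<dots> \<le> outer_prob M (F T) + outer_prob M (G T)"
    using assms(2,3) by (rule outer_prob_Un)
  finally show ?case using elim by linarith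
qed

lemma unif_op1_cong:
  assumes "\<And>T i \<omega>. i \<in> I T \<Longrightarrow> \<omega> \<in> space M \<Longrightarrow> X T i \<omega> = Y T i \<omega>"
  shows "unif_op1 M I X \<longleftrightarrow> unif_op1 M I Y"
proof -
  have "{\<omega>\<in>space M. \<exists>i\<in>I T. e < \<bar>X T i \<omega>\<bar>} = {\<omega>\<in>space M. \<exists>i\<in>I T. e < \<bar>Y T i \<omega>\<bar>}" for T e
    using assms by auto
  then show ?thesis unfolding unif_op1_def by simp
qed

lemma unif_op1_iff_eventually_less:
  "unif_op1 M I X \<longleftrightarrow> (\<forall>e>0. \<forall>d>0.
     eventually (\<lambda>T. outer_prob M {\<omega>\<in>space M. \<exists>i\<in>I T. e < \<bar>X T i \<omega>\<bar>} < d) sequentially)"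
proof -
  have "(f \<longlonglongrightarrow> 0) \<longleftrightarrow> (\<forall>d>0. eventually (\<lambda>T. f T < d) sequentially)"
    if "\<And>T. 0 \<le> f T" for f :: "nat \<Rightarrow> real"
    using that unfolding order_tendsto_iff
    by (metis (mono_tags, lifting) always_eventually order.strict_trans2)
  then show ?thesis
    unfolding unif_op1_def by (simp add: outer_prob_nonneg)
qed

lemma unif_op1_mult_Op1:
  assumes "unif_op1 M I r" and "unif_Op1 M I n"
  shows "unif_op1 M I (\<lambda>T i \<omega>. r T i \<omega> * (1 + \<bar>n T i \<omega>\<bar>)\<^sup>2)"
  unfolding unif_op1_iff_eventually_less
proof (intro allI impI)
  fix e d :: real assume e: "0 < e" and d: "0 < d"
  obtain K0 where K0: "eventually (\<lambda>T. outer_prob M {\<omega>\<in>space M. \<exists>i\<in>I T. K0 < \<bar>n T i \<omega>\<bar>} < d/2)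
      sequentially"
    using assms(2) d unfolding unif_Op1_def by (meson half_gt_zero)
  define K where "K = max K0 0"
  have small_r: "eventually (\<lambda>T. outer_prob M {\<omega>\<in>space M. \<exists>i\<in>I T. e / (1 + K)\<^sup>2 < \<bar>r T i \<omega>\<bar>} < d/2)
      sequentially"
  proof -
    have "0 < e / (1 + K)\<^sup>2" using e unfolding K_def by simp
    then show ?thesis using assms(1) d unfolding unif_op1_iff_eventually_less by (meson half_gt_zero)
  qed
  have cover: "{\<omega>\<in>space M. \<exists>i\<in>I T. e < \<bar>r T i \<omega> * (1 + \<bar>n T i \<omega>\<bar>)\<^sup>2\<bar>}
      \<subseteq> {\<omega>\<in>space M. \<exists>i\<in>I T. K0 < \<bar>n T i \<omega>\<bar>}
        \<union> {\<omega>\<in>space M. \<exists>i\<in>I T. e / (1 + K)\<^sup>2 < \<bar>r T i \<omega>\<bar>}" for T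
  proof -
    have "\<bar>r T i \<omega> * (1 + \<bar>n T i \<omega>\<bar>)\<^sup>2\<bar> \<le> e"
      if "\<bar>n T i \<omega>\<bar> \<le> K0" "\<bar>r T i \<omega>\<bar> \<le> e / (1 + K)\<^sup>2" for i \<omega>
    proof -
      have "\<bar>r T i \<omega>\<bar> * (1 + \<bar>n T i \<omega>\<bar>)\<^sup>2 \<le> e / (1 + K)\<^sup>2 * (1 + K)\<^sup>2"
        using that unfolding K_def by (intro mult_mono power_mono) auto
      also have "\<dots> = e" unfolding K_def by simp
      finally show ?thesis by (simp add: abs_mult)
    qed
    then have "K0 < \<bar>n T i \<omega>\<bar> \<or> e / (1 + K)\<^sup>2 < \<bar>r T i \<omega>\<bar>"
      if "e < \<bar>r T i \<omega> * (1 + \<bar>n T i \<omega>\<bar>)\<^sup>2\<bar>" for i \<omega>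
      using that by (meson not_le)
    then show ?thesis by blast
  qed
  have "eventually (\<lambda>T. outer_prob M
      {\<omega>\<in>space M. \<exists>i\<in>I T. e < \<bar>r T i \<omega> * (1 + \<bar>n T i \<omega>\<bar>)\<^sup>2\<bar>} < d/2 + d/2) sequentially"
    by (rule eventually_outer_prob_cover_less[OF cover _ _ K0 small_r]) auto
  then show "eventually (\<lambda>T. outer_prob M
      {\<omega>\<in>space M. \<exists>i\<in>I T. e < \<bar>r T i \<omega> * (1 + \<bar>n T i \<omega>\<bar>)\<^sup>2\<bar>} < d) sequentially"
    by simp
qed

section \<open>Tightness of weakly convergent processes\<close>

lemma SUP_norm_le_add_bfun_dist:
  fixes f g :: "'a \<Rightarrow> 'b::real_normed_vector"
  assumes "A \<noteq> {}" "bounded (f ` A)" "bounded (g ` A)"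
  shows "(SUP a\<in>A. norm (f a)) \<le> (SUP a\<in>A. norm (g a)) + bfun_dist A f g"
proof (rule cSUP_least[OF assms(1)])
  fix a assume "a \<in> A"
  have "norm (f a) \<le> norm (g a) + norm (f a - g a)"
    by (metis add.commute norm_triangle_sub)
  also have "norm (g a) \<le> (SUP a\<in>A. norm (g a))"
    using \<open>a \<in> A\<close> assms(3)
    by (intro cSUP_upper bounded_imp_bdd_above) (simp_all add: bounded_norm_comp)
  also have "norm (f a - g a) \<le> bfun_dist A f g"
    unfolding bfun_dist_def using \<open>a \<in> A\<close> bounded_minus_comp[OF assms(2,3)]
    by (intro cSUP_upper bounded_imp_bdd_above) (simp_all add: bounded_norm_comp)
  finally show "norm (f a) \<le> (SUP a\<in>A. norm (g a)) + bfun_dist A f g" by simp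
qed

lemma bcont_fun_clamped_sup_norm:
  assumes "A \<noteq> {}"
  shows "bcont_fun A (\<lambda>f::'a \<Rightarrow> 'b::real_normed_vector. min 1 (max 0 ((SUP a\<in>A. norm (f a)) - K)))"
  unfolding bcont_fun_def
proof (intro conjI ballI allI impI)
  show "bounded (range (\<lambda>f::'a \<Rightarrow> 'b. min 1 (max 0 ((SUP a\<in>A. norm (f a)) - K))))"
    unfolding bounded_iff by (intro exI[of _ 1]) auto
next
  fix f :: "'a \<Rightarrow> 'b" and e :: real assume f: "f \<in> bfun_space A" and "0 < e"
  show "\<exists>d>0. \<forall>g\<in>bfun_space A. bfun_dist A f g < d \<longrightarrow>
      \<bar>min 1 (max 0 ((SUP a\<in>A. norm (f a)) - K)) - min 1 (max 0 ((SUP a\<in>A. norm (g a)) - K))\<bar> < e"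
  proof (intro exI[of _ e] conjI ballI impI \<open>0 < e\<close>)
    fix g assume g: "g \<in> bfun_space A" and "bfun_dist A f g < e"
    moreover have "bfun_dist A g f = bfun_dist A f g"
      unfolding bfun_dist_def by (simp add: norm_minus_commute)
    ultimately have "\<bar>(SUP a\<in>A. norm (f a)) - (SUP a\<in>A. norm (g a))\<bar> < e"
      using SUP_norm_le_add_bfun_dist[OF assms, of f g] SUP_norm_le_add_bfun_dist[OF assms, of g f] f
      by (auto simp: bfun_space_def)
    then show "\<bar>min 1 (max 0 ((SUP a\<in>A. norm (f a)) - K)) - min 1 (max 0 ((SUP a\<in>A. norm (g a)) - K))\<bar> < e"
      by (simp add: min_def max_def abs_if split: if_splits)
  qed
qed

lemma outer_prob_le_outer_exp:
  assumes "prob_space M" and Y: "\<And>\<omega>. \<omega> \<in> space M \<Longrightarrow> 0 \<le> Y \<omega> \<and> Y \<omega> \<le> 1"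
    and E: "E \<subseteq> space M" "\<And>\<omega>. \<omega> \<in> E \<Longrightarrow> Y \<omega> = 1"
  shows "outer_prob M E \<le> outer_exp M Y"
  unfolding outer_exp_def
proof (rule cInf_greatest)
  interpret prob_space M by fact
  show "{integral\<^sup>L M U |U. integrable M U \<and> (\<forall>\<omega>\<in>space M. Y \<omega> \<le> U \<omega>)} \<noteq> {}"
    using Y by (auto intro!: exI[of _ "\<lambda>_. 1"])
  fix x assume "x \<in> {integral\<^sup>L M U |U. integrable M U \<and> (\<forall>\<omega>\<in>space M. Y \<omega> \<le> U \<omega>)}"
  then obtain U where U: "integrable M U" "\<forall>\<omega>\<in>space M. Y \<omega> \<le> U \<omega>" "x = integral\<^sup>L M U" by auto
  then have "{\<omega> \<in> space M. 1 \<le> U \<omega>} \<in> sets M" by measurable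
  then have "outer_prob M E \<le> measure M {\<omega> \<in> space M. 1 \<le> U \<omega>}"
    using E U(2) by (intro outer_prob_le_measure) force+
  also have "\<dots> \<le> integral\<^sup>L M U / 1"
    using U(1,2) Y by (intro integral_Markov_inequality_measure[OF _ sets.top] AE_I2) fastforce+
  finally show "outer_prob M E \<le> x" using U by simp
qed

lemma outer_exp_le_integral:
  assumes "integrable M U" "\<And>\<omega>. \<omega> \<in> space M \<Longrightarrow> Y \<omega> \<le> U \<omega>"
    and "\<And>\<omega>. \<omega> \<in> space M \<Longrightarrow> 0 \<le> Y \<omega>"
  shows "outer_exp M Y \<le> integral\<^sup>L M U"
  unfolding outer_exp_def
proof (rule cInf_lower)
  show "integral\<^sup>L M U \<in> {integral\<^sup>L M U |U. integrable M U \<and> (\<forall>\<omega>\<in>space M. Y \<omega> \<le> U \<omega>)}"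
    using assms by auto
  show "bdd_below {integral\<^sup>L M U |U. integrable M U \<and> (\<forall>\<omega>\<in>space M. Y \<omega> \<le> U \<omega>)}"
  proof (rule bdd_belowI[of _ 0], safe)
    fix V assume "integrable M V" "\<forall>\<omega>\<in>space M. Y \<omega> \<le> V \<omega>"
    then show "0 \<le> integral\<^sup>L M V"
      using assms(3) by (intro integral_nonneg_AE AE_I2) (force intro: order.trans)
  qed
qed

lemma continuous_process_bounded_in_prob:
  fixes Sl :: "'v \<Rightarrow> 'a::{metric_space, second_countable_topology} \<Rightarrow> 'b::real_normed_vector"
  assumes "prob_space N" and A: "compact A"
    and meas: "\<And>a. a \<in> A \<Longrightarrow> (\<lambda>\<omega>. Sl \<omega> a) \<in> borel_measurable N"
    and cont: "AE \<omega> in N. continuous_on A (Sl \<omega>)" and "0 < e"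
  obtains K :: nat and E where "E \<in> sets N" "measure N E < e"
    "\<And>\<omega> a. \<omega> \<in> space N - E \<Longrightarrow> a \<in> A \<Longrightarrow> norm (Sl \<omega> a) \<le> K"
proof -
  interpret prob_space N by fact
  obtain D where D: "countable D" "D \<subseteq> A" "A \<subseteq> closure D" using separable by blast
  obtain Nul where Nul: "Nul \<in> null_sets N" "\<And>\<omega>. \<omega> \<in> space N - Nul \<Longrightarrow> continuous_on A (Sl \<omega>)"
    using AE_E3[OF cont] by blast
  define E where "E K = Nul \<union> {\<omega>\<in>space N. \<exists>d\<in>D. real K < norm (Sl \<omega> d)}" for K :: nat
  have E_sets: "E K \<in> sets N" for K
  proof -
    have "{\<omega>\<in>space N. \<exists>d\<in>D. real K < norm (Sl \<omega> d)} \<in> sets N"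
      using D meas by (intro sets.sets_Collect_countable_Ex') auto
    then show ?thesis unfolding E_def using Nul(1) by auto
  qed
  have "decseq E"
    unfolding decseq_def E_def by auto (meson of_nat_le_iff order_le_less_trans)
  moreover have "(\<Inter>K. E K) \<subseteq> Nul"
  proof
    fix \<omega> assume \<omega>: "\<omega> \<in> (\<Inter>K. E K)"
    show "\<omega> \<in> Nul"
    proof (rule ccontr)
      assume "\<omega> \<notin> Nul"
      with \<omega> Nul(2) have "\<omega> \<in> space N" "continuous_on A (Sl \<omega>)" unfolding E_def by auto
      then have "bounded (Sl \<omega> ` A)"
        using A by (intro compact_imp_bounded compact_continuous_image)
      then obtain B where B: "\<forall>a\<in>A. norm (Sl \<omega> a) \<le> B" unfolding bounded_iff by blast
      obtain K :: nat where "B < real K" using reals_Archimedean2 by blast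
      moreover obtain d where "d \<in> D" "real K < norm (Sl \<omega> d)"
        using \<omega> \<open>\<omega> \<notin> Nul\<close> unfolding E_def by blast
      moreover have "norm (Sl \<omega> d) \<le> B" using B D(2) \<open>d \<in> D\<close> by blast
      ultimately show False by linarith
    qed
  qed
  then have "measure N (\<Inter>K. E K) \<le> measure N Nul"
    using Nul(1) by (intro finite_measure_mono) auto
  then have "measure N (\<Inter>K. E K) = 0"
    using Nul(1) measure_eq_0_null_sets[of Nul N] measure_nonneg[of N "\<Inter>K. E K"] by linarith
  ultimately have "(\<lambda>K. measure N (E K)) \<longlonglongrightarrow> 0"
    using finite_Lim_measure_decseq[of E] E_sets by auto
  then have "eventually (\<lambda>K. measure N (E K) < e) sequentially"
    using \<open>0 < e\<close> by (rule order_tendstoD)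
  then obtain K where K: "measure N (E K) < e"
    by (auto simp: eventually_sequentially)
  have "norm (Sl \<omega> a) \<le> K" if \<omega>: "\<omega> \<in> space N - E K" and a: "a \<in> A" for \<omega> a
  proof -
    have outside: "\<omega> \<in> space N - Nul" and small: "\<And>d. d \<in> D \<Longrightarrow> norm (Sl \<omega> d) \<le> K"
      using \<omega> unfolding E_def by (auto simp: not_less)
    have "continuous_on A (Sl \<omega>)" using outside by (rule Nul(2))
    moreover have "closure D \<subseteq> A" using D(2) compact_imp_closed[OF A] by (rule closure_minimal)
    ultimately have "continuous_on (closure D) (\<lambda>a. norm (Sl \<omega> a))"
      by (intro continuous_on_norm) (rule continuous_on_subset)
    moreover have "a \<in> closure D" using a D(3) by blast
    ultimately show ?thesis
      using small by (rule continuous_le_on_closure)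
  qed
  then show ?thesis using that[OF E_sets K] by blast
qed

lemma unif_Op1_of_weak_conv_bfun:
  fixes X :: "nat \<Rightarrow> 'w \<Rightarrow> 'a::{metric_space, second_countable_topology} \<Rightarrow> 'b::real_normed_vector"
    and Sl :: "'v \<Rightarrow> 'a \<Rightarrow> 'b"
  assumes M: "prob_space M" and N: "prob_space N" and A: "compact A"
    and X_cont: "\<And>T \<omega>. \<omega> \<in> space M \<Longrightarrow> continuous_on A (X T \<omega>)"
    and S_meas: "\<And>a. a \<in> A \<Longrightarrow> (\<lambda>\<omega>. Sl \<omega> a) \<in> borel_measurable N"
    and S_cont: "AE \<omega> in N. continuous_on A (Sl \<omega>)"
    and weak: "weak_conv_bfun M N A X Sl"
  shows "unif_Op1 M (\<lambda>_. A) (\<lambda>T a \<omega>. norm (X T \<omega> a))"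
  unfolding unif_Op1_def
proof (intro allI impI)
  fix e :: real assume "0 < e"
  show "\<exists>K. eventually (\<lambda>T. outer_prob M {\<omega>\<in>space M. \<exists>a\<in>A. K < \<bar>norm (X T \<omega> a)\<bar>} < e) sequentially"
  proof (cases "A = {}")
    case True
    then show ?thesis using \<open>0 < e\<close> by (simp add: outer_prob_empty)
  next
    case False
    obtain E and K :: nat where E: "E \<in> sets N" "measure N E < e"
      and bounded: "\<And>\<omega> a. \<omega> \<in> space N - E \<Longrightarrow> a \<in> A \<Longrightarrow> norm (Sl \<omega> a) \<le> K"
      using continuous_process_bounded_in_prob[OF N A S_meas S_cont \<open>0 < e\<close>] by metis
    define h where "h f = min 1 (max 0 ((SUP a\<in>A. norm (f a)) - real K))" for f :: "'a \<Rightarrow> 'b"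
    have h01: "0 \<le> h f \<and> h f \<le> 1" for f unfolding h_def by simp
    have h_restrict: "h (restrict f A) = h f" for f
      unfolding h_def by (intro arg_cong[where f = "\<lambda>x. min 1 (max 0 (x - real K))"] SUP_cong) auto
    have lim: "(\<lambda>T. outer_exp M (\<lambda>\<omega>. h (restrict (X T \<omega>) A)))
        \<longlonglongrightarrow> outer_exp N (\<lambda>\<omega>. h (restrict (Sl \<omega>) A))"
      using weak bcont_fun_clamped_sup_norm[OF False] unfolding weak_conv_bfun_def h_def by blast
    have "outer_exp N (\<lambda>\<omega>. h (restrict (Sl \<omega>) A)) \<le> integral\<^sup>L N (indicator E)"
    proof (rule outer_exp_le_integral)
      interpret prob_space N by fact
      show "integrable N (indicator E :: 'v \<Rightarrow> real)"
        using E(1) by (intro integrable_real_indicator) (auto simp: less_top[symmetric])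
      show "0 \<le> h (restrict (Sl \<omega>) A)" for \<omega> using h01 by blast
      fix \<omega> assume "\<omega> \<in> space N"
      show "h (restrict (Sl \<omega>) A) \<le> indicator E \<omega>"
      proof (cases "\<omega> \<in> E")
        case False
        then have "(SUP a\<in>A. norm (Sl \<omega> a)) \<le> K"
          using bounded \<open>\<omega> \<in> space N\<close> by (intro cSUP_least[OF \<open>A \<noteq> {}\<close>]) auto
        then show ?thesis unfolding h_restrict by (simp add: h_def)
      qed (use h01 in simp)
    qed
    also have "integral\<^sup>L N (indicator E) < e"
      using E by (simp add: sets.Int_space_eq2)
    finally have "eventually (\<lambda>T. outer_exp M (\<lambda>\<omega>. h (restrict (X T \<omega>) A)) < e) sequentially"
      by (rule order_tendstoD(2)[OF lim])
    moreover have "outer_prob M {\<omega>\<in>space M. \<exists>a\<in>A. real K + 1 < \<bar>norm (X T \<omega> a)\<bar>}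
        \<le> outer_exp M (\<lambda>\<omega>. h (restrict (X T \<omega>) A))" for T
    proof (rule outer_prob_le_outer_exp[OF M])
      fix \<omega> assume "\<omega> \<in> {\<omega>\<in>space M. \<exists>a\<in>A. real K + 1 < \<bar>norm (X T \<omega> a)\<bar>}"
      then obtain a where "\<omega> \<in> space M" "a \<in> A" "real K + 1 < norm (X T \<omega> a)" by auto
      moreover have "bounded (X T \<omega> ` A)"
        using X_cont[OF \<open>\<omega> \<in> space M\<close>] A by (intro compact_imp_bounded compact_continuous_image)
      ultimately have "real K + 1 < (SUP a\<in>A. norm (X T \<omega> a))"
        using cSUP_upper[of a A "\<lambda>a. norm (X T \<omega> a)"] bounded_imp_bdd_above
        by (fastforce simp: bounded_norm_comp)
      then show "h (restrict (X T \<omega>) A) = 1" unfolding h_restrict by (simp add: h_def)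
    qed (use h01 in auto)
    ultimately have "eventually (\<lambda>T. outer_prob M
        {\<omega>\<in>space M. \<exists>a\<in>A. real K + 1 < \<bar>norm (X T \<omega> a)\<bar>} < e) sequentially"
      by (elim eventually_mono) (rule le_less_trans)
    then show ?thesis by blast
  qed
qed

section \<open>Evaluation at a consistent estimator\<close>

lemma eventually_diagonal_index:
  fixes G :: "nat \<Rightarrow> nat \<Rightarrow> bool"
  assumes "\<And>m. eventually (\<lambda>T. G T m) sequentially"
  obtains n where "\<And>m. eventually (\<lambda>T. m \<le> n T \<and> G T (n T)) sequentially"
proof
  define good where "good T = {m. m \<le> T \<and> (\<forall>k\<le>m. G T k)}" for T
  define n where "n T = (if good T = {} then 0 else Max (good T))" for T
  fix m
  have "eventually (\<lambda>T. \<forall>k\<in>{..m}. G T k) sequentially"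
    using assms by (simp add: eventually_ball_finite)
  then show "eventually (\<lambda>T. m \<le> n T \<and> G T (n T)) sequentially"
    using eventually_ge_at_top[of m]
  proof eventually_elim
    case (elim T)
    then have "m \<in> good T" unfolding good_def by auto
    moreover have "finite (good T)" unfolding good_def by simp
    ultimately have "n T \<in> good T" "m \<le> n T"
      unfolding n_def by (auto intro: Max_in Max_ge)
    then show ?case unfolding good_def by auto
  qed
qed

lemma exists_vanishing_rate:
  fixes P :: "nat \<Rightarrow> real \<Rightarrow> real"
  assumes lim: "\<And>\<eta>. 0 < \<eta> \<Longrightarrow> (\<lambda>T. P T \<eta>) \<longlonglongrightarrow> 0" and nonneg: "\<And>T \<eta>. 0 \<le> P T \<eta>"
  obtains \<gamma> where "\<And>T. 0 < \<gamma> T" "\<gamma> \<longlonglongrightarrow> 0" "(\<lambda>T. P T (\<gamma> T)) \<longlonglongrightarrow> 0"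
proof -
  define G where "G T m \<longleftrightarrow> P T (1 / (real m + 1)) < 1 / (real m + 1)" for T m
  have "eventually (\<lambda>T. G T m) sequentially" for m
    using order_tendstoD(2)[OF lim] unfolding G_def by simp
  then obtain n where n: "\<And>m. eventually (\<lambda>T. m \<le> n T \<and> G T (n T)) sequentially"
    using eventually_diagonal_index by blast
  \<comment> \<open>n T is a tolerance index that tends to infinity while P T already meets it at time T.\<close>
  define \<gamma> where "\<gamma> T = 1 / (real (n T) + 1)" for T
  have pos: "0 < \<gamma> T" for T unfolding \<gamma>_def by simp
  have "eventually (\<lambda>T. \<gamma> T < e) sequentially" if "0 < e" for e
  proof -
    obtain m :: nat where m: "1 / (real m + 1) < e"
      using reals_Archimedean[OF \<open>0 < e\<close>] by (auto simp: inverse_eq_divide add.commute)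
    show ?thesis using n[of m]
    proof eventually_elim
      case (elim T)
      then have "\<gamma> T \<le> 1 / (real m + 1)" unfolding \<gamma>_def by (simp add: frac_le)
      then show ?case using m by linarith
    qed
  qed
  then have vanish: "\<gamma> \<longlonglongrightarrow> 0"
    using pos by (auto simp: order_tendsto_iff intro: always_eventually less_trans)
  have "(\<lambda>T. P T (\<gamma> T)) \<longlonglongrightarrow> 0"
  proof (rule tendsto_sandwich[OF _ _ tendsto_const vanish])
    show "eventually (\<lambda>T. 0 \<le> P T (\<gamma> T)) sequentially" using nonneg by simp
    show "eventually (\<lambda>T. P T (\<gamma> T) \<le> \<gamma> T) sequentially"
      using n[of 0] by eventually_elim (auto simp: G_def \<gamma>_def)
  qed
  then show ?thesis using that pos vanish by blast
qed

lemma unif_op1_at_consistent_estimator: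
  fixes dev :: "'j \<Rightarrow> real" and est :: "nat \<Rightarrow> 'i \<Rightarrow> 'w \<Rightarrow> 'j"
  assumes est_in: "\<And>T i \<omega>. i \<in> I \<Longrightarrow> \<omega> \<in> space M \<Longrightarrow> est T i \<omega> \<in> J"
    and consistent: "unif_op1 M (\<lambda>_. I) (\<lambda>T i \<omega>. dev (est T i \<omega>))"
    and local: "\<And>\<gamma>. (\<forall>T. 0 < \<gamma> T) \<Longrightarrow> \<gamma> \<longlonglongrightarrow> 0 \<Longrightarrow> unif_op1 M (\<lambda>T. {j\<in>J. dev j \<le> \<gamma> T}) F"
  shows "unif_op1 M (\<lambda>_. I) (\<lambda>T i \<omega>. F T (est T i \<omega>) \<omega>)"
  unfolding unif_op1_iff_eventually_less
proof (intro allI impI)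
  fix e d :: real assume e: "0 < e" and d: "0 < d"
  define far where "far T \<eta> = outer_prob M {\<omega>\<in>space M. \<exists>i\<in>I. \<eta> < \<bar>dev (est T i \<omega>)\<bar>}" for T \<eta>
  have "(\<lambda>T. far T \<eta>) \<longlonglongrightarrow> 0" if "0 < \<eta>" for \<eta>
    using consistent that unfolding unif_op1_def far_def by simp
  moreover have "0 \<le> far T \<eta>" for T \<eta> unfolding far_def by (rule outer_prob_nonneg) auto
  \<comment> \<open>A radius shrinking slowly enough that the estimator stays inside it with probability tending to one.\<close>
  ultimately obtain \<gamma> where \<gamma>: "\<And>T. 0 < \<gamma> T" "\<gamma> \<longlonglongrightarrow> 0" "(\<lambda>T. far T (\<gamma> T)) \<longlonglongrightarrow> 0"
    by (rule exists_vanishing_rate) auto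
  have far: "eventually (\<lambda>T. far T (\<gamma> T) < d/2) sequentially"
    using order_tendstoD(2)[OF \<gamma>(3), of "d/2"] d by simp
  have near: "eventually (\<lambda>T. outer_prob M {\<omega>\<in>space M. \<exists>j\<in>{j\<in>J. dev j \<le> \<gamma> T}. e < \<bar>F T j \<omega>\<bar>} < d/2)
      sequentially"
    using local[of \<gamma>] \<gamma>(1,2) e d unfolding unif_op1_iff_eventually_less by (meson half_gt_zero)
  have cover: "{\<omega>\<in>space M. \<exists>i\<in>I. e < \<bar>F T (est T i \<omega>) \<omega>\<bar>}
      \<subseteq> {\<omega>\<in>space M. \<exists>i\<in>I. \<gamma> T < \<bar>dev (est T i \<omega>)\<bar>}
        \<union> {\<omega>\<in>space M. \<exists>j\<in>{j\<in>J. dev j \<le> \<gamma> T}. e < \<bar>F T j \<omega>\<bar>}" for T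
    using est_in by (fastforce simp: not_less)
  have "eventually (\<lambda>T. outer_prob M {\<omega>\<in>space M. \<exists>i\<in>I. e < \<bar>F T (est T i \<omega>) \<omega>\<bar>} < d/2 + d/2)
      sequentially"
    by (rule eventually_outer_prob_cover_less[OF cover _ _ far[unfolded far_def] near]) auto
  then show "eventually (\<lambda>T. outer_prob M {\<omega>\<in>space M. \<exists>i\<in>I. e < \<bar>F T (est T i \<omega>) \<omega>\<bar>} < d)
      sequentially"
    by simp
qed

section \<open>Rates from a quadratic expansion\<close>

lemma le_of_square_le_linear:
  fixes n a b :: real
  assumes "0 \<le> a" "0 \<le> b" "n\<^sup>2 \<le> a + b * n"
  shows "n \<le> 1 + a + b"
proof (cases "n \<le> 1")
  case False
  then have "n * n \<le> (a + b) * n"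
    using assms mult_left_mono[of 1 n a] by (simp add: power2_eq_square algebra_simps)
  then show ?thesis using False by simp
qed (use assms in simp)

lemma quadratic_expansion_bound:
  fixes x u :: "'a::real_inner" and c K D R q :: real
  assumes c: "0 < c" and expansion: "R = D - u \<bullet> x + q / 2"
    and quadratic: "c * (norm x)\<^sup>2 \<le> q" and near_max: "-1 \<le> D"
    and score: "norm u \<le> K" and remainder: "\<bar>R\<bar> \<le> c / 8 * (1 + norm x)\<^sup>2"
  shows "norm x \<le> 2 + (4 + 4 * K) / c"
proof -
  define n where "n = norm x"
  have K: "0 \<le> K" using score norm_ge_zero order_trans by blast
  have "u \<bullet> x \<le> K * n"
    using norm_cauchy_schwarz[of u x] score unfolding n_def by (smt (verit) mult_right_mono norm_ge_zero)
  moreover have "(1 + n)\<^sup>2 \<le> 2 * (1 + n\<^sup>2)"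
    using zero_le_power2[of "n - 1"] by (simp add: power2_sum power2_diff)
  then have "c / 8 * (1 + n)\<^sup>2 \<le> c / 8 * (2 * (1 + n\<^sup>2))"
    using c by (intro mult_left_mono) auto
  moreover have "c / 8 * (2 * (1 + n\<^sup>2)) = c / 4 + c * n\<^sup>2 / 4"
    by (simp add: algebra_simps)
  ultimately have "c * n\<^sup>2 / 4 \<le> 1 + c / 4 + K * n"
    using expansion quadratic near_max remainder unfolding n_def[symmetric] by linarith
  moreover have "c * ((1 + 4 / c) + (4 * K / c) * n) = c + 4 + 4 * K * n"
    using c by (simp add: field_simps)
  ultimately have "c * n\<^sup>2 \<le> c * ((1 + 4 / c) + (4 * K / c) * n)"
    by linarith
  then have "n\<^sup>2 \<le> (1 + 4 / c) + (4 * K / c) * n"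
    using c by simp
  then have "n \<le> 1 + (1 + 4 / c) + 4 * K / c"
    using c K by (intro le_of_square_le_linear[of "1 + 4 / c" "4 * K / c" n]) auto
  then show ?thesis unfolding n_def by (simp add: add_divide_distrib)
qed

lemma quadratic_expansion_rates:
  fixes x u :: "nat \<Rightarrow> 'i \<Rightarrow> 'w \<Rightarrow> 'a::real_inner" and D R q e :: "nat \<Rightarrow> 'i \<Rightarrow> 'w \<Rightarrow> real"
  assumes c: "0 < c"
    and expansion: "\<And>T i \<omega>. R T i \<omega> = D T i \<omega> - u T i \<omega> \<bullet> x T i \<omega> + q T i \<omega> / 2"
    and quadratic: "\<And>T i \<omega>. i \<in> I \<Longrightarrow> c * (norm (x T i \<omega>))\<^sup>2 \<le> q T i \<omega>"
    and near_max: "\<And>T i \<omega>. i \<in> I \<Longrightarrow> \<omega> \<in> space M \<Longrightarrow> e T i \<omega> \<le> D T i \<omega>"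
    and "unif_op1 M (\<lambda>_. I) e"
    and score: "unif_Op1 M (\<lambda>_. I) (\<lambda>T i \<omega>. norm (u T i \<omega>))"
    and remainder: "unif_op1 M (\<lambda>_. I) (\<lambda>T i \<omega>. R T i \<omega> / (1 + norm (x T i \<omega>))\<^sup>2)"
  shows "unif_Op1 M (\<lambda>_. I) (\<lambda>T i \<omega>. norm (x T i \<omega>))" and "unif_op1 M (\<lambda>_. I) R"
proof -
  show rate: "unif_Op1 M (\<lambda>_. I) (\<lambda>T i \<omega>. norm (x T i \<omega>))"
    unfolding unif_Op1_def
  proof (intro allI impI)
    fix \<epsilon> :: real assume "0 < \<epsilon>"
    define \<delta> where "\<delta> = \<epsilon> / 3"
    have "0 < \<delta>" using \<open>0 < \<epsilon>\<close> unfolding \<delta>_def by simp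
    then obtain Ku where small_u:
      "eventually (\<lambda>T. outer_prob M {\<omega>\<in>space M. \<exists>i\<in>I. Ku < \<bar>norm (u T i \<omega>)\<bar>} < \<delta>) sequentially"
      using score unfolding unif_Op1_def by blast
    have small_e: "eventually (\<lambda>T. outer_prob M {\<omega>\<in>space M. \<exists>i\<in>I. 1 < \<bar>e T i \<omega>\<bar>} < \<delta>) sequentially"
      using \<open>unif_op1 M (\<lambda>_. I) e\<close> \<open>0 < \<delta>\<close> unfolding unif_op1_iff_eventually_less by simp
    have small_r: "eventually (\<lambda>T. outer_prob M
        {\<omega>\<in>space M. \<exists>i\<in>I. c / 8 < \<bar>R T i \<omega> / (1 + norm (x T i \<omega>))\<^sup>2\<bar>} < \<delta>) sequentially"
      using remainder \<open>0 < \<delta>\<close> c unfolding unif_op1_iff_eventually_less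
      by (meson divide_pos_pos zero_less_numeral)
    define K where "K = 2 + (4 + 4 * Ku) / c"
    have bound: "norm (x T i \<omega>) \<le> K"
      if "i \<in> I" "\<omega> \<in> space M" "\<bar>e T i \<omega>\<bar> \<le> 1" "\<bar>norm (u T i \<omega>)\<bar> \<le> Ku"
        and r: "\<bar>R T i \<omega> / (1 + norm (x T i \<omega>))\<^sup>2\<bar> \<le> c / 8" for T i \<omega>
    proof -
      have "0 < 1 + norm (x T i \<omega>)"
        by (simp add: add_pos_nonneg)
      then have "\<bar>R T i \<omega>\<bar> \<le> c / 8 * (1 + norm (x T i \<omega>))\<^sup>2"
        using r by (simp add: abs_div pos_divide_le_eq)
      then show ?thesis
        unfolding K_def using that near_max[of i \<omega> T] quadratic[of i T \<omega>]
        by (intro quadratic_expansion_bound[OF c expansion]) auto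
    qed
    have cover: "{\<omega>\<in>space M. \<exists>i\<in>I. K < \<bar>norm (x T i \<omega>)\<bar>}
        \<subseteq> {\<omega>\<in>space M. \<exists>i\<in>I. 1 < \<bar>e T i \<omega>\<bar>}
          \<union> ({\<omega>\<in>space M. \<exists>i\<in>I. c / 8 < \<bar>R T i \<omega> / (1 + norm (x T i \<omega>))\<^sup>2\<bar>}
             \<union> {\<omega>\<in>space M. \<exists>i\<in>I. Ku < \<bar>norm (u T i \<omega>)\<bar>})" for T
    proof
      fix \<omega> assume "\<omega> \<in> {\<omega>\<in>space M. \<exists>i\<in>I. K < \<bar>norm (x T i \<omega>)\<bar>}"
      then obtain i where "i \<in> I" "\<omega> \<in> space M" "\<not> norm (x T i \<omega>) \<le> K" by auto
      show "\<omega> \<in> {\<omega>\<in>space M. \<exists>i\<in>I. 1 < \<bar>e T i \<omega>\<bar>}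
          \<union> ({\<omega>\<in>space M. \<exists>i\<in>I. c / 8 < \<bar>R T i \<omega> / (1 + norm (x T i \<omega>))\<^sup>2\<bar>}
             \<union> {\<omega>\<in>space M. \<exists>i\<in>I. Ku < \<bar>norm (u T i \<omega>)\<bar>})" (is "_ \<in> ?bad")
      proof (rule ccontr)
        assume "\<omega> \<notin> ?bad"
        then have "\<bar>e T i \<omega>\<bar> \<le> 1" "\<bar>norm (u T i \<omega>)\<bar> \<le> Ku"
          "\<bar>R T i \<omega> / (1 + norm (x T i \<omega>))\<^sup>2\<bar> \<le> c / 8"
          using \<open>i \<in> I\<close> \<open>\<omega> \<in> space M\<close> by (auto simp: not_less)
        then show False using bound \<open>i \<in> I\<close> \<open>\<omega> \<in> space M\<close> \<open>\<not> norm (x T i \<omega>) \<le> K\<close> by blast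
      qed
    qed
    have "eventually (\<lambda>T. outer_prob M {\<omega>\<in>space M. \<exists>i\<in>I. K < \<bar>norm (x T i \<omega>)\<bar>}
        < \<delta> + (\<delta> + \<delta>)) sequentially"
      by (intro eventually_outer_prob_cover_less[OF cover _ _ small_e]
          eventually_outer_prob_cover_less[OF _ _ _ small_r small_u]) auto
    then show "\<exists>K. eventually (\<lambda>T. outer_prob M {\<omega>\<in>space M. \<exists>i\<in>I. K < \<bar>norm (x T i \<omega>)\<bar>} < \<epsilon>)
        sequentially"
      unfolding \<delta>_def by auto
  qed
  have "1 + norm (x T i \<omega>) \<noteq> 0" for T i \<omega>
    by (smt (verit) norm_ge_zero)
  then have "R = (\<lambda>T i \<omega>. R T i \<omega> / (1 + norm (x T i \<omega>))\<^sup>2 * (1 + \<bar>norm (x T i \<omega>)\<bar>)\<^sup>2)"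
    by (intro ext) simp
  then show "unif_op1 M (\<lambda>_. I) R"
    using unif_op1_mult_Op1[OF remainder rate] by simp
qed

section \<open>Quadratic forms of symmetric matrices\<close>

lemma inner_matrix_vector_symmetric:
  fixes Q :: "real^'n^'n"
  assumes "transpose Q = Q"
  shows "v \<bullet> (Q *v w) = w \<bullet> (Q *v v)"
  by (metis assms dot_lmul_matrix inner_commute vector_transpose_matrix)

lemma quadratic_form_complete_square:
  fixes Q :: "real^'n^'n"
  assumes "transpose Q = Q" and "Q *v z = u"
  shows "u \<bullet> x - 1/2 * (x \<bullet> (Q *v x)) = 1/2 * (z \<bullet> (Q *v z)) - 1/2 * ((x - z) \<bullet> (Q *v (x - z)))"
  using inner_matrix_vector_symmetric[OF assms(1), of z x] assms(2)
  by (simp add: matrix_vector_mult_diff_distrib inner_diff_left inner_diff_right inner_commute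
      algebra_simps)

lemma bdd_below_mat_eigvals: "bdd_below (mat_eigvals Q)"
proof -
  obtain K where K: "\<And>x. norm (Q *v x) \<le> norm x * K"
    using bounded_linear.bounded[OF matrix_vector_mul_bounded_linear] by blast
  have "-K \<le> l" if l: "l \<in> mat_eigvals Q" for l
  proof -
    obtain v where "v \<noteq> 0" "Q *v v = l *\<^sub>R v" using l unfolding mat_eigvals_def by auto
    then show ?thesis using K[of v] by (simp add: mult.commute)
  qed
  then show ?thesis by (rule bdd_belowI)
qed

lemma linear_coeff_zero_if_quadratic_nonneg:
  fixes a b :: real
  assumes "\<And>t. 0 \<le> 2 * t * a + t\<^sup>2 * b"
  shows "a = 0"
proof (rule ccontr)
  assume "a \<noteq> 0"
  define B where "B = \<bar>b\<bar> + 1"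
  have B: "0 < B" "b < 2 * B" unfolding B_def by auto
  have "0 \<le> B\<^sup>2 * (2 * (-a/B) * a + (-a/B)\<^sup>2 * b)"
    using assms[of "-a/B"] by simp
  also have "\<dots> = a\<^sup>2 * (b - 2 * B)"
    using B by (simp add: field_simps power2_eq_square)
  also have "\<dots> < 0"
    using \<open>a \<noteq> 0\<close> B by (intro mult_pos_neg) auto
  finally show False by simp
qed

lemma quadratic_form_ge_sphere_min:
  fixes Q :: "real^'n^'n"
  assumes min: "\<And>y. norm y = 1 \<Longrightarrow> m \<le> y \<bullet> (Q *v y)"
  shows "m * (norm x)\<^sup>2 \<le> x \<bullet> (Q *v x)"
proof (cases "x = 0")
  case False
  have "m \<le> (x /\<^sub>R norm x) \<bullet> (Q *v (x /\<^sub>R norm x))"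
    using False by (intro min) simp
  also have "\<dots> = x \<bullet> (Q *v x) / (norm x)\<^sup>2"
    by (simp add: matrix_vector_mult_scaleR power2_eq_square divide_inverse)
  finally show ?thesis using False by (simp add: field_simps)
qed simp

lemma sphere_minimizer_eigenvector:
  fixes Q :: "real^'n^'n"
  assumes sym: "transpose Q = Q" and v: "norm v = 1"
    and min: "\<And>y. norm y = 1 \<Longrightarrow> v \<bullet> (Q *v v) \<le> y \<bullet> (Q *v y)"
  shows "Q *v v = (v \<bullet> (Q *v v)) *\<^sub>R v"
proof -
  define m where "m = v \<bullet> (Q *v v)"
  have stationary: "w \<bullet> (Q *v v) - m * (v \<bullet> w) = 0" for w
  proof (rule linear_coeff_zero_if_quadratic_nonneg)
    fix t :: real
    have "m * (norm (v + t *\<^sub>R w))\<^sup>2 \<le> (v + t *\<^sub>R w) \<bullet> (Q *v (v + t *\<^sub>R w))"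
      using min unfolding m_def by (rule quadratic_form_ge_sphere_min)
    moreover have "(v + t *\<^sub>R w) \<bullet> (Q *v (v + t *\<^sub>R w))
        = m + 2 * t * (w \<bullet> (Q *v v)) + t\<^sup>2 * (w \<bullet> (Q *v w))"
      using inner_matrix_vector_symmetric[OF sym, of v w]
      by (simp add: m_def matrix_vector_right_distrib matrix_vector_mult_scaleR inner_add_left
          inner_add_right algebra_simps power2_eq_square)
    moreover have "(norm (v + t *\<^sub>R w))\<^sup>2 = 1 + 2 * t * (v \<bullet> w) + t\<^sup>2 * (norm w)\<^sup>2"
      using v norm_eq_1[of v] unfolding power2_norm_eq_inner
      by (simp add: inner_add_left inner_add_right inner_commute algebra_simps power2_eq_square)
    ultimately show "0 \<le> 2 * t * (w \<bullet> (Q *v v) - m * (v \<bullet> w))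
        + t\<^sup>2 * (w \<bullet> (Q *v w) - m * (norm w)\<^sup>2)"
      by (simp add: algebra_simps)
  qed
  define w where "w = Q *v v - m *\<^sub>R v"
  have "w \<bullet> w = w \<bullet> (Q *v v) - m * (v \<bullet> w)"
    by (simp add: w_def inner_diff_left inner_commute)
  then show ?thesis using stationary[of w] unfolding w_def m_def by simp
qed

lemma quadratic_form_ge_lambda_min:
  fixes Q :: "real^'n^'n"
  assumes sym: "transpose Q = Q" and c: "c \<le> lambda_min Q"
  shows "c * (norm x)\<^sup>2 \<le> x \<bullet> (Q *v x)"
proof -
  have "continuous_on (sphere 0 1) (\<lambda>y. y \<bullet> (Q *v y))"
    by (intro continuous_intros bounded_linear.continuous_on[OF matrix_vector_mul_bounded_linear])
  moreover have "sphere (0::real^'n) 1 \<noteq> {}" by (simp add: sphere_eq_empty)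
  ultimately obtain v where "v \<in> sphere 0 1" "\<And>y. y \<in> sphere 0 1 \<Longrightarrow> v \<bullet> (Q *v v) \<le> y \<bullet> (Q *v y)"
    using continuous_attains_inf[OF compact_sphere] by blast
  then have v: "norm v = 1" and min: "\<And>y. norm y = 1 \<Longrightarrow> v \<bullet> (Q *v v) \<le> y \<bullet> (Q *v y)"
    by auto
  have "v \<bullet> (Q *v v) \<in> mat_eigvals Q"
    using sphere_minimizer_eigenvector[OF sym v min] v unfolding mat_eigvals_def
    by (intro CollectI exI[of _ v]) auto
  then have "lambda_min Q \<le> v \<bullet> (Q *v v)"
    unfolding lambda_min_def by (rule cInf_lower[OF _ bdd_below_mat_eigvals])
  then have "c \<le> v \<bullet> (Q *v v)" using c by simp
  then have "c * (norm x)\<^sup>2 \<le> v \<bullet> (Q *v v) * (norm x)\<^sup>2"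
    by (simp add: mult_right_mono)
  also have "\<dots> \<le> x \<bullet> (Q *v x)"
    using min by (rule quadratic_form_ge_sphere_min)
  finally show ?thesis .
qed

lemma matrix_inv_right_if_lambda_min_pos:
  fixes Q :: "real^'n^'n"
  assumes sym: "transpose Q = Q" and "0 < lambda_min Q"
  shows "Q *v (matrix_inv Q *v u) = u"
proof -
  have "x = 0" if "Q *v x = 0" for x
    using quadratic_form_ge_lambda_min[OF sym order.refl, of x] that assms(2)
    by (simp add: mult_le_0_iff)
  then have "\<exists>Q'. Q' ** Q = mat 1"
    using matrix_left_invertible_ker by blast
  then have "invertible Q"
    using invertible_left_inverse by blast
  then obtain Q' where "Q ** Q' = mat 1 \<and> Q' ** Q = mat 1"
    unfolding invertible_def by blast
  then have "Q ** matrix_inv Q = mat 1 \<and> matrix_inv Q ** Q = mat 1"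
    unfolding matrix_inv_def by (rule someI)
  then show ?thesis
    by (simp add: matrix_vector_mul_assoc)
qed

lemma std_normal_density_le_1: "std_normal_density z \<le> 1"
proof -
  have "1 \<le> sqrt (2 * pi)" using pi_gt3 by simp
  then have "1 / sqrt (2 * pi) \<le> 1" by simp
  moreover have "exp (- z\<^sup>2 / 2) \<le> 1" by simp
  ultimately show ?thesis
    unfolding std_normal_density_def by (intro mult_le_one) auto
qed

lemma ar_dens_bounds:
  assumes "0 < s0" "s0 \<le> v $ ix (p + 1)"
  shows "0 < ar_dens p ix y t v" "ar_dens p ix y t v \<le> 1 / sqrt s0"
proof -
  define s where "s = sqrt (v $ ix (p + 1))"
  define z where "z = (y t - v $ ix 0 - (\<Sum>i=1..p. v $ ix i * y (t - int i))) / s"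
  have s: "0 < s" "sqrt s0 \<le> s" using assms by (auto simp: s_def)
  have dens: "ar_dens p ix y t v = std_normal_density z / s"
    unfolding ar_dens_def Let_def s_def z_def by simp
  show "0 < ar_dens p ix y t v"
    unfolding dens using s by (simp add: normal_density_pos)
  have "std_normal_density z / s \<le> 1 / s"
    using std_normal_density_le_1 s by (simp add: divide_right_mono)
  also have "\<dots> \<le> 1 / sqrt s0" using s assms(1) by (simp add: frac_le)
  finally show "ar_dens p ix y t v \<le> 1 / sqrt s0" unfolding dens .
qed

lemma ln_mixture_le:
  fixes w f g C :: real
  assumes "0 < w" "w < 1" "0 < f" "f \<le> C" "0 < g" "g \<le> C"
  shows "ln (w * f + (1 - w) * g) \<le> C"
proof -
  have pos: "0 < w * f + (1 - w) * g" using assms by (intro add_pos_nonneg) auto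
  have "w * f + (1 - w) * g \<le> w * C + (1 - w) * C"
    using assms by (intro add_mono mult_left_mono) auto
  then show ?thesis using ln_le_minus_one[OF pos] by (simp add: algebra_simps)
qed

lemma mix_loglik_le:
  assumes "0 < s0" "s0 \<le> (b + \<phi>) $ ix (p + 1)" "s0 \<le> (b + \<psi>) $ ix (p + 1)"
    and "\<And>t. 0 < mixw t a b \<phi> \<psi> (lagv p y t) \<and> mixw t a b \<phi> \<psi> (lagv p y t) < 1"
  shows "mix_loglik p ix mixw y T a b \<phi> \<psi> \<le> real T * (1 / sqrt s0)"
proof -
  have "mix_loglik p ix mixw y T a b \<phi> \<psi> \<le> of_nat (card {1..int T}) * (1 / sqrt s0)"
    unfolding mix_loglik_def using assms
    by (intro sum_bounded_above ln_mixture_le) (auto intro: ar_dens_bounds)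
  then show ?thesis by simp
qed

lemma compact_ar_params_variance_bounded_below:
  assumes "compact K" "K \<subseteq> ar_param_set p ix"
  obtains s0 where "0 < s0" "\<And>v. v \<in> K \<Longrightarrow> s0 \<le> v $ ix (p + 1)"
proof (cases "K = {}")
  case False
  have "continuous_on K (\<lambda>v. v $ ix (p + 1))"
    by (intro continuous_intros)
  then obtain v0 where "v0 \<in> K" "\<And>v. v \<in> K \<Longrightarrow> v0 $ ix (p + 1) \<le> v $ ix (p + 1)"
    using continuous_attains_inf[OF assms(1) False] by blast
  moreover have "0 < v0 $ ix (p + 1)"
    using \<open>v0 \<in> K\<close> assms(2) unfolding ar_param_set_def by auto
  ultimately show ?thesis using that by blast
qed (use that[of 1] in auto)

theorem lemma1:
  fixes M :: "'w measure" and N :: "'v measure"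
    and p k :: nat
    and ix :: "nat \<Rightarrow> 'm::finite"
    and Sb :: "'m set"
    and y eps :: "int \<Rightarrow> 'w \<Rightarrow> real"
    and phis :: "real^'m"
    and Phit :: "(real^'m) set"
    and A :: "'al::euclidean_space set"
    and B Phi :: "(real^'m) set"
    and mixw :: "int \<Rightarrow> 'al \<Rightarrow> real^'m \<Rightarrow> real^'m \<Rightarrow> real^'m \<Rightarrow> (nat \<Rightarrow> real) \<Rightarrow> real"
    and bh ph vh :: "nat \<Rightarrow> 'al \<Rightarrow> 'w \<Rightarrow> real^'m"
    and pmap pinv :: "'al \<Rightarrow> (real^'m) \<times> (real^'m) \<Rightarrow> (real^'m) \<times> (real^'m)"
    and theta :: "'al \<Rightarrow> real^'m \<Rightarrow> real^'m \<Rightarrow> real^'m \<Rightarrow> real^'r::finite"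
    and s :: "nat \<Rightarrow> 'al \<Rightarrow> 'w \<Rightarrow> real^'r"
    and S :: "'al \<Rightarrow> 'v \<Rightarrow> real^'r"
    and Info :: "'al \<Rightarrow> real^'r^'r"
  defines "bs \<equiv> proj Sb phis"
    and "phs \<equiv> proj (- Sb) phis"
    and "Pia \<equiv> \<lambda>a. pmap a ` (Phi \<times> Phi)"
    and "L \<equiv> \<lambda>T a b \<phi> \<psi> \<omega>. mix_loglik p ix mixw (\<lambda>t. y t \<omega>) T a b \<phi> \<psi>"
    and "Lpi \<equiv> \<lambda>T a b pp w \<omega>. lpi p ix mixw pinv (\<lambda>t. y t \<omega>) T a b pp w"
    and "ST \<equiv> \<lambda>T a \<omega>. \<Sum>t=1..T. s t a \<omega>"
    and "R \<equiv> \<lambda>T a b pp w \<omega>. remT p ix mixw pinv (\<Sum>t=1..T. s t a \<omega>) (theta a) (Info a)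
                              (\<lambda>t. y t \<omega>) T a (proj Sb phis) (proj (- Sb) phis) b pp w"
    and "Z \<equiv> \<lambda>T a \<omega>. matrix_inv (Info a) *v ((1 / sqrt (real T)) *\<^sub>R (\<Sum>t=1..T. s t a \<omega>))"
    and "pih \<equiv> \<lambda>T a \<omega>. fst (pmap a (ph T a \<omega>, vh T a \<omega>))"
    and "vph \<equiv> \<lambda>T a \<omega>. snd (pmap a (ph T a \<omega>, vh T a \<omega>))"
    and "thh \<equiv> \<lambda>T a \<omega>. theta a (bh T a \<omega>) (fst (pmap a (ph T a \<omega>, vh T a \<omega>)))
                                  (snd (pmap a (ph T a \<omega>, vh T a \<omega>)))"
  assumes
    \<comment> \<open>Assumption 1 (i)\<close>
        M: "prob_space M"
    and p: "1 \<le> p"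
    and ix: "bij_betw ix {..<p+2} UNIV"
    and y_meas: "\<forall>t. y t \<in> borel_measurable M"
    and eps_meas: "\<forall>t. eps t \<in> borel_measurable M"
    and AR: "\<forall>t. \<forall>\<omega>\<in>space M. y t \<omega> = phis $ ix 0 + (\<Sum>i=1..p. phis $ ix i * y (t - int i) \<omega>)
                                    + sqrt (phis $ ix (p+1)) * eps t \<omega>"
    and stationary: "\<forall>(s0::int) n. distr M (PiM {..<n} (\<lambda>_. borel)) (\<lambda>\<omega>. \<lambda>i\<in>{..<n}. y (s0 + int i) \<omega>)
                          = distr M (PiM {..<n} (\<lambda>_. borel)) (\<lambda>\<omega>. \<lambda>i\<in>{..<n}. y (int i) \<omega>)"
    and eps_indep: "prob_space.indep_vars M (\<lambda>_. borel) eps UNIV"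
    and eps_normal: "\<forall>t. distributed M lborel (eps t) std_normal_density"
    and eps_past: "\<forall>t. prob_space.indep_set M (sets (vimage_algebra (space M) (eps t) borel))
                   (sets (vimage_algebra (space M) (\<lambda>\<omega>. \<lambda>j::nat. y (t - 1 - int j) \<omega>)
                                         (PiM UNIV (\<lambda>_. borel))))"
    and Phit: "compact Phit" "Phit \<subseteq> ar_param_set p ix" "phis \<in> interior Phit"
    \<comment> \<open>Assumption 1 (ii)\<close>
    and A: "compact A"
    and Sb: "Sb \<noteq> UNIV"
    and B: "compact B" "B \<subseteq> coordsub Sb"
    and Phi: "compact Phi" "Phi \<subseteq> coordsub (- Sb)"
    and BPhi: "\<forall>b\<in>coordsub Sb. \<forall>\<phi>\<in>coordsub (- Sb). (b \<in> B \<and> \<phi> \<in> Phi) \<longleftrightarrow> b + \<phi> \<in> Phit"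
    \<comment> \<open>Assumption 1 (iii)\<close>
    and mixw: "\<forall>t. \<forall>a\<in>A. \<forall>b\<in>B. \<forall>\<phi>\<in>Phi. \<forall>\<psi>\<in>Phi.
                  mixw t a b \<phi> \<psi> \<in> borel_measurable (PiM {..<p} (\<lambda>_. borel)) \<and>
                  (\<forall>\<omega>\<in>space M. 0 < mixw t a b \<phi> \<psi> (lagv p (\<lambda>t. y t \<omega>) t)
                                 \<and> mixw t a b \<phi> \<psi> (lagv p (\<lambda>t. y t \<omega>) t) < 1)"
    \<comment> \<open>Assumption 2\<close>
    and est_in: "\<forall>T. \<forall>a\<in>A. \<forall>\<omega>\<in>space M. bh T a \<omega> \<in> B \<and> ph T a \<omega> \<in> Phi \<and> vh T a \<omega> \<in> Phi"
    and est_max: "unif_op1 M (\<lambda>_. A) (\<lambda>T a \<omega>. L T a (bh T a \<omega>) (ph T a \<omega>) (vh T a \<omega>) \<omega>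
                    - (SUP x\<in>B \<times> Phi \<times> Phi. L T a (fst x) (fst (snd x)) (snd (snd x)) \<omega>))"
    and est_cons: "unif_op1 M (\<lambda>_. A) (\<lambda>T a \<omega>. norm ((bh T a \<omega>, ph T a \<omega>, vh T a \<omega>) - (bs, phs, phs)))"
    \<comment> \<open>Assumption 3\<close>
    and pmap: "\<forall>a\<in>A. inj_on (pmap a) (Phi \<times> Phi) \<and> continuous_on (Phi \<times> Phi) (pmap a)
                 \<and> Pia a \<subseteq> coordsub (- Sb) \<times> coordsub (- Sb)
                 \<and> (\<forall>x\<in>Phi \<times> Phi. pinv a (pmap a x) = x) \<and> continuous_on (Pia a) (pinv a)"
    and pmap_diag: "\<forall>a\<in>A. pmap a ` {(\<phi>, \<phi>) | \<phi>. \<phi> \<in> Phi} = Phi \<times> {0} \<and> pmap a (phs, phs) = (phs, 0)"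
    and est_cons_pi: "unif_op1 M (\<lambda>_. A) (\<lambda>T a \<omega>. norm ((bh T a \<omega>, pih T a \<omega>, vph T a \<omega>) - (bs, phs, 0)))"
    \<comment> \<open>Assumption 4\<close>
    and k: "2 \<le> k"
    and mixw_Ck: "\<forall>a\<in>A. \<forall>t. \<forall>\<omega>\<in>space M. Ck_dirs (dirs3 Sb) k
                   (sub_interior (coordsub Sb \<times> coordsub (- Sb) \<times> coordsub (- Sb)) (B \<times> Phi \<times> Phi))
                   (\<lambda>x. mixw t a (fst x) (fst (snd x)) (snd (snd x)) (lagv p (\<lambda>t. y t \<omega>) t))"
    and pinv_Ck: "\<forall>a\<in>A. Ck_dirs (dirs2 Sb) k
                   (sub_interior (coordsub (- Sb) \<times> coordsub (- Sb)) (Pia a)) (pinv a)"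
    \<comment> \<open>Assumption 5 (i)\<close>
    and theta0: "\<forall>a\<in>A. theta a bs phs 0 = 0"
    and theta_sep: "\<forall>e>0. \<exists>d>0. \<forall>a\<in>A. \<forall>b\<in>B. \<forall>pv\<in>Pia a.
                      e \<le> norm ((b, pv) - (bs, phs, 0)) \<longrightarrow> d \<le> norm (theta a b (fst pv) (snd pv))"
    \<comment> \<open>Assumption 5 (ii)\<close>
    and ST_meas: "\<forall>T. \<forall>a\<in>A. (\<lambda>\<omega>. ST T a \<omega>) \<in> measurable
                    (vimage_algebra (space M) (\<lambda>\<omega>. \<lambda>j::nat. y (int T - int j) \<omega>) (PiM UNIV (\<lambda>_. borel))) borel"
    and ST_cont: "\<forall>T. \<forall>\<omega>\<in>space M. continuous_on A (\<lambda>a. ST T a \<omega>)"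
    and N: "prob_space N"
    and S_meas: "\<forall>a\<in>A. S a \<in> borel_measurable N"
    and S_gauss: "\<forall>F c. finite F \<and> F \<subseteq> A \<longrightarrow> centered_normal_rv N (\<lambda>\<omega>. \<Sum>a\<in>F. c a \<bullet> S a \<omega>)"
    and S_cont: "AE \<omega> in N. continuous_on A (\<lambda>a. S a \<omega>)"
    and weak: "weak_conv_bfun M N A (\<lambda>T \<omega> a. (1 / sqrt (real T)) *\<^sub>R ST T a \<omega>) (\<lambda>\<omega> a. S a \<omega>)"
    and S_cov: "\<forall>a\<in>A. \<forall>i j. integrable N (\<lambda>\<omega>. S a \<omega> $ i * S a \<omega> $ j)
                     \<and> (\<integral>\<omega>. S a \<omega> $ i * S a \<omega> $ j \<partial>N) = Info a $ i $ j"
    and s_cov: "\<forall>t\<ge>1. \<forall>a\<in>A. \<forall>i j. integrable M (\<lambda>\<omega>. s t a \<omega> $ i * s t a \<omega> $ j)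
                     \<and> (\<integral>\<omega>. s t a \<omega> $ i * s t a \<omega> $ j \<partial>M) = Info a $ i $ j"
    \<comment> \<open>Assumption 5 (iii)\<close>
    and Info_sym: "\<forall>a\<in>A. transpose (Info a) = Info a"
    and Info_cont: "continuous_on A Info"
    and Info_min: "\<exists>c>0. \<forall>a\<in>A. c \<le> lambda_min (Info a)"
    and Info_max: "\<exists>C. \<forall>a\<in>A. lambda_max (Info a) \<le> C"
    \<comment> \<open>Assumption 5 (iv)\<close>
    and R_small: "\<forall>\<gamma>::nat \<Rightarrow> real. (\<forall>T. 0 < \<gamma> T) \<and> \<gamma> \<longlonglongrightarrow> 0 \<longrightarrow>
        unif_op1 M (\<lambda>T. {(a, b, pv). a \<in> A \<and> b \<in> B \<and> pv \<in> Pia a \<and> norm ((b, pv) - (bs, phs, 0)) \<le> \<gamma> T})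
          (\<lambda>T x \<omega>. case x of (a, b, pv) \<Rightarrow>
             R T a b (fst pv) (snd pv) \<omega> / (1 + norm (sqrt (real T) *\<^sub>R theta a b (fst pv) (snd pv)))\<^sup>2)"
  shows "unif_Op1 M (\<lambda>_. A) (\<lambda>T a \<omega>. norm (sqrt (real T) *\<^sub>R thh T a \<omega>))
    \<and> unif_op1 M (\<lambda>_. A) (\<lambda>T a \<omega>. R T a (bh T a \<omega>) (pih T a \<omega>) (vph T a \<omega>) \<omega>)
    \<and> unif_op1 M (\<lambda>_. A) (\<lambda>T a \<omega>.
           (Lpi T a (bh T a \<omega>) (pih T a \<omega>) (vph T a \<omega>) \<omega> - Lpi T a bs phs 0 \<omega>)
           - ((1/2) * (Z T a \<omega> \<bullet> (Info a *v Z T a \<omega>))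
              - (1/2) * ((sqrt (real T) *\<^sub>R thh T a \<omega> - Z T a \<omega>)
                           \<bullet> (Info a *v (sqrt (real T) *\<^sub>R thh T a \<omega> - Z T a \<omega>)))))"
proof -
  note defs = assms(1-11)
  have bs: "bs \<in> B" and phs: "phs \<in> Phi"
  proof -
    have "bs \<in> coordsub Sb" "phs \<in> coordsub (- Sb)" "bs + phs = phis"
      unfolding defs coordsub_def proj_def by (auto simp: vec_eq_iff)
    then show "bs \<in> B" "phs \<in> Phi"
      using BPhi Phit(3) interior_subset by blast+
  qed
  obtain s0 where s0: "0 < s0" "\<And>v. v \<in> Phit \<Longrightarrow> s0 \<le> v $ ix (p + 1)"
    using compact_ar_params_variance_bounded_below[OF Phit(1,2)] by blast
  have L_bdd: "bdd_above ((\<lambda>x. L T a (fst x) (fst (snd x)) (snd (snd x)) \<omega>) ` (B \<times> Phi \<times> Phi))"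
    if "\<omega> \<in> space M" "a \<in> A" for T a \<omega>
  proof (rule bdd_aboveI2)
    fix x assume "x \<in> B \<times> Phi \<times> Phi"
    then have "fst x \<in> B" "fst (snd x) \<in> Phi" "snd (snd x) \<in> Phi" by auto
    then have "fst x + fst (snd x) \<in> Phit" "fst x + snd (snd x) \<in> Phit"
      using BPhi B(2) Phi(2) by blast+
    then show "L T a (fst x) (fst (snd x)) (snd (snd x)) \<omega> \<le> real T * (1 / sqrt s0)"
      unfolding defs using mixw that \<open>x \<in> B \<times> Phi \<times> Phi\<close>
      by (intro mix_loglik_le s0) auto
  qed
  obtain c where c: "0 < c" "\<And>a. a \<in> A \<Longrightarrow> c \<le> lambda_min (Info a)"
    using Info_min by blast
  define x where "x T a \<omega> = sqrt (real T) *\<^sub>R thh T a \<omega>" for T a \<omega>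
  define u where "u T a \<omega> = (1 / sqrt (real T)) *\<^sub>R ST T a \<omega>" for T a \<omega>
  define D where "D T a \<omega> = Lpi T a (bh T a \<omega>) (pih T a \<omega>) (vph T a \<omega>) \<omega> - Lpi T a bs phs 0 \<omega>"
    for T a \<omega>
  define Rh where "Rh T a \<omega> = R T a (bh T a \<omega>) (pih T a \<omega>) (vph T a \<omega>) \<omega>" for T a \<omega>
  define gap where "gap T a \<omega> = L T a (bh T a \<omega>) (ph T a \<omega>) (vh T a \<omega>) \<omega>
      - (SUP x\<in>B \<times> Phi \<times> Phi. L T a (fst x) (fst (snd x)) (snd (snd x)) \<omega>)" for T a \<omega>
  have expansion: "Rh T a \<omega> = D T a \<omega> - u T a \<omega> \<bullet> x T a \<omega> + (x T a \<omega> \<bullet> (Info a *v x T a \<omega>)) / 2"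
    for T a \<omega>
    unfolding Rh_def D_def u_def x_def defs remT_def Let_def by simp
  have near_max: "gap T a \<omega> \<le> D T a \<omega>" if "a \<in> A" "\<omega> \<in> space M" for T a \<omega>
  proof -
    have "pinv a (pmap a (ph T a \<omega>, vh T a \<omega>)) = (ph T a \<omega>, vh T a \<omega>)"
      using pmap est_in that by auto
    moreover have "pinv a (phs, 0) = (phs, phs)"
    proof -
      have "pmap a (phs, phs) = (phs, 0)" using pmap_diag that by blast
      then show ?thesis using pmap phs that by force
    qed
    moreover have "L T a bs phs phs \<omega> \<le> (SUP x\<in>B \<times> Phi \<times> Phi. L T a (fst x) (fst (snd x)) (snd (snd x)) \<omega>)"
      using cSUP_upper[OF _ L_bdd[OF that(2,1)], of "(bs, phs, phs)"] bs phs by simp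
    ultimately show ?thesis
      unfolding gap_def D_def defs lpi_def by simp
  qed
  have score: "unif_Op1 M (\<lambda>_. A) (\<lambda>T a \<omega>. norm (u T a \<omega>))"
  proof -
    have "continuous_on A (\<lambda>a. (1 / sqrt (real T)) *\<^sub>R ST T a \<omega>)" if "\<omega> \<in> space M" for T \<omega>
      using ST_cont that by (intro continuous_intros) auto
    then show ?thesis
      unfolding u_def using S_meas by (intro unif_Op1_of_weak_conv_bfun[OF M N A _ _ S_cont weak]) auto
  qed
  have remainder: "unif_op1 M (\<lambda>_. A) (\<lambda>T a \<omega>. Rh T a \<omega> / (1 + norm (x T a \<omega>))\<^sup>2)"
  proof -
    define J where "J = {(a, b, pv). a \<in> A \<and> b \<in> B \<and> pv \<in> Pia a}"
    define dev where "dev = (\<lambda>(a::'al, b, pv::(real^'m) \<times> (real^'m)). norm ((b, pv) - (bs, phs, 0)))"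
    define est where "est T a \<omega> = (a, bh T a \<omega>, pmap a (ph T a \<omega>, vh T a \<omega>))" for T a \<omega>
    define F where "F T j \<omega> = (case j of (a, b, pv) \<Rightarrow> R T a b (fst pv) (snd pv) \<omega>
        / (1 + norm (sqrt (real T) *\<^sub>R theta a b (fst pv) (snd pv)))\<^sup>2)" for T j \<omega>
    have "unif_op1 M (\<lambda>_. A) (\<lambda>T a \<omega>. F T (est T a \<omega>) \<omega>)"
    proof (rule unif_op1_at_consistent_estimator[where J = J and dev = dev])
      show "est T a \<omega> \<in> J" if "a \<in> A" "\<omega> \<in> space M" for T a \<omega>
        using est_in that unfolding est_def J_def defs by auto
      show "unif_op1 M (\<lambda>_. A) (\<lambda>T a \<omega>. dev (est T a \<omega>))"
        using est_cons_pi unfolding dev_def est_def defs by simp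
      fix \<gamma> :: "nat \<Rightarrow> real" assume "\<forall>T. 0 < \<gamma> T" "\<gamma> \<longlonglongrightarrow> 0"
      moreover have "{j \<in> J. dev j \<le> \<gamma> T}
          = {(a, b, pv). a \<in> A \<and> b \<in> B \<and> pv \<in> Pia a \<and> norm ((b, pv) - (bs, phs, 0)) \<le> \<gamma> T}" for T
        unfolding J_def dev_def by auto
      ultimately show "unif_op1 M (\<lambda>T. {j \<in> J. dev j \<le> \<gamma> T}) F"
        using R_small unfolding F_def defs by simp
    qed
    then show ?thesis
      unfolding F_def est_def Rh_def x_def defs by simp
  qed
  have quadratic: "c * (norm (x T a \<omega>))\<^sup>2 \<le> x T a \<omega> \<bullet> (Info a *v x T a \<omega>)" if "a \<in> A" for T a \<omega>
    using quadratic_form_ge_lambda_min Info_sym c(2) that by blast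
  have rate: "unif_Op1 M (\<lambda>_. A) (\<lambda>T a \<omega>. norm (x T a \<omega>))"
    and remainder_small: "unif_op1 M (\<lambda>_. A) Rh"
    using quadratic_expansion_rates[OF c(1) expansion quadratic near_max _ score remainder] est_max
    unfolding gap_def by auto
  have completed_square: "(Lpi T a (bh T a \<omega>) (pih T a \<omega>) (vph T a \<omega>) \<omega> - Lpi T a bs phs 0 \<omega>)
      - ((1/2) * (Z T a \<omega> \<bullet> (Info a *v Z T a \<omega>))
        - (1/2) * ((sqrt (real T) *\<^sub>R thh T a \<omega> - Z T a \<omega>)
                    \<bullet> (Info a *v (sqrt (real T) *\<^sub>R thh T a \<omega> - Z T a \<omega>)))) = Rh T a \<omega>"
    if "a \<in> A" for T a \<omega>
  proof -
    have "Info a *v Z T a \<omega> = u T a \<omega>"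
      using matrix_inv_right_if_lambda_min_pos Info_sym c that unfolding u_def defs
      by (meson less_le_trans)
    then show ?thesis
      using quadratic_form_complete_square[of "Info a" "Z T a \<omega>" "u T a \<omega>" "x T a \<omega>"]
        expansion[of T a \<omega>] Info_sym that unfolding D_def x_def by simp
  qed
  show ?thesis
  proof (intro conjI)
    show "unif_Op1 M (\<lambda>_. A) (\<lambda>T a \<omega>. norm (sqrt (real T) *\<^sub>R thh T a \<omega>))"
      using rate unfolding x_def .
    show "unif_op1 M (\<lambda>_. A) (\<lambda>T a \<omega>. R T a (bh T a \<omega>) (pih T a \<omega>) (vph T a \<omega>) \<omega>)"
      using remainder_small unfolding Rh_def .
    show "unif_op1 M (\<lambda>_. A) (\<lambda>T a \<omega>.
           (Lpi T a (bh T a \<omega>) (pih T a \<omega>) (vph T a \<omega>) \<omega> - Lpi T a bs phs 0 \<omega>)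
           - ((1/2) * (Z T a \<omega> \<bullet> (Info a *v Z T a \<omega>))
              - (1/2) * ((sqrt (real T) *\<^sub>R thh T a \<omega> - Z T a \<omega>)
                           \<bullet> (Info a *v (sqrt (real T) *\<^sub>R thh T a \<omega> - Z T a \<omega>)))))"
      by (rule unif_op1_cong[THEN iffD2, OF _ remainder_small]) (rule completed_square)
  qed
qed

end
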